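(* Let $N_\pm\subset L$ be primitive sublattices of signature $(1,r_\pm-1)$, and let $\mathcal{Z}_\pm$ be $(N_\pm,\mathrm{Amp}_{\mathcal{Z}_\pm})$-generic families of building blocks. Let $T_\pm=N_\pm^\perp\subset L$ and $W_\pm=T_\mp\cap N_\pm$. Suppose that (i) $R=N_+\cap N_-$ is negative definite; (ii) $N_+$ and $N_-$ intersect orthogonally, i.e. $N_\pm\otimes\mathbb{R}=(R\otimes\mathbb{R})\oplus(W_\pm\otimes\mathbb{R})$; (iii) $(W_\pm\otimes\mathbb{R})\cap\mathrm{Amp}_{\mathcal{Z}_\pm}\neq\emptyset$. Then there exist building blocks $(Z_\pm,S_\pm)\in\mathcal{Z}_\pm$ and $N_\pm$-polarised markings $h_\pm:L\to H^2(S_\pm;\mathbb{Z})$ whose period points are $\langle k_\mp,\pm k_0\rangle$ for an orthonormal triple $(k_+,k_-,k_0)$ of positive classes in $L_{\mathbb{R}}$ with $k_\pm\in\mathrm{Amp}_{\mathcal{Z}_\pm}$; in particular $h_\pm(k_\pm)$ is the restriction to $S_\pm$ of a Kähler class on $Z_\pm$.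
   Context: $L$ is the K3 lattice (even unimodular, signature $(3,19)$), $L_{\mathbb{R}}=L\otimes\mathbb{R}$. A building block is a pair $(Z,S)$ where $Z$ is a nonsingular projective complex 3-fold with a morphism $f:Z\to\mathbb{P}^1$, $S=f^{-1}(\infty)$ a nonsingular K3 surface in $|-K_Z|$, $-K_Z$ primitive, the image of $H^2(Z;\mathbb{Z})\to H^2(S;\mathbb{Z})$ primitive, and $H^3(Z;\mathbb{Z})$ torsion-free. For a primitive $N\subset L$, a marking $h:L\to H^2(S;\mathbb{Z})$ (isometry) of the fibre of a block $(Z,S)$ is $N$-polarised if $h(N)$ is the image of $H^2(Z;\mathbb{Z})\to H^2(S;\mathbb{Z})$. The period point of a marked K3 is the oriented positive 2-plane $h^{-1}(\langle[\mathrm{Re}\,\Omega],[\mathrm{Im}\,\Omega]\rangle)\subset L_{\mathbb{R}}$ for a holomorphic 2-form $\Omega$. The Griffiths domain $D_N$ is the set of oriented positive-definite 2-planes in $N^\perp\otimes\mathbb{R}$, a complex manifold (an open subset of the quadric $\{\Pi\in\mathbb{P}(N^\perp\otimes\mathbb{C}):\Pi^2=0,\ \Pi\cdot\bar\Pi>0\}$). Given an open subcone $\mathrm{Amp}_{\mathcal{Z}}$ of the positive cone of $N\otimes\mathbb{R}$, a family $\mathcal{Z}$ of building blocks is $(N,\mathrm{Amp}_{\mathcal{Z}})$-generic if there is $U_{\mathcal{Z}}\subseteq D_N$ whose complement is a locally finite union of complex analytic submanifolds of positive codimension such that for every $\Pi\in U_{\mathcal{Z}}$ and $k\in\mathrm{Amp}_{\mathcal{Z}}$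 there is $(Z,S)\in\mathcal{Z}$ and an $N$-polarised marking $h$ with period point $\Pi$ and with $h(k)$ the restriction to $S$ of a Kähler class on $Z$. *)

theory Defs
  imports "HOL-Analysis.Analysis"
begin

text \<open>The K3 lattice is modelled as the integer points of real^22, with an integral
symmetric bilinear form given by a Gram matrix B (any even unimodular form of
signature (3,19) is isometric to the K3 lattice).\<close>

type_synonym rvec = "real^22"
type_synonym cvec = "complex^22"

definition bil :: "real^22^22 \<Rightarrow> rvec \<Rightarrow> rvec \<Rightarrow> real" where
  "bil B x y = x \<bullet> (B *v y)"

definition Lint :: "rvec set" where
  "Lint = {x. \<forall>i. x $ i \<in> \<int>}"

definition pos_def_on :: "real^22^22 \<Rightarrow> rvec set \<Rightarrow> bool" where
  "pos_def_on B W \<longleftrightarrow> (\<forall>x\<in>W. x \<noteq> 0 \<longrightarrow> bil B x x > 0)"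

definition neg_def_on :: "real^22^22 \<Rightarrow> rvec set \<Rightarrow> bool" where
  "neg_def_on B W \<longleftrightarrow> (\<forall>x\<in>W. x \<noteq> 0 \<longrightarrow> bil B x x < 0)"

definition form_signature :: "real^22^22 \<Rightarrow> rvec set \<Rightarrow> nat \<Rightarrow> nat \<Rightarrow> bool" where
  "form_signature B V p q \<longleftrightarrow>
     subspace V \<and> dim V = p + q \<and>
     (\<forall>x\<in>V. (\<forall>y\<in>V. bil B x y = 0) \<longrightarrow> x = 0) \<and>
     (\<exists>W. subspace W \<and> W \<subseteq> V \<and> dim W = p \<and> pos_def_on B W) \<and>
     (\<forall>W. subspace W \<and> W \<subseteq> V \<and> pos_def_on B W \<longrightarrow> dim W \<le> p) \<and>
     (\<exists>W. subspace W \<and> W \<subseteq> V \<and> dim W = q \<and> neg_def_on B W) \<and>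
     (\<forall>W. subspace W \<and> W \<subseteq> V \<and> neg_def_on B W \<longrightarrow> dim W \<le> q)"

definition K3_form :: "real^22^22 \<Rightarrow> bool" where
  "K3_form B \<longleftrightarrow> (\<forall>i j. B $ i $ j \<in> \<int>) \<and> transpose B = B \<and>
     (\<forall>x\<in>Lint. \<exists>m::int. bil B x x = 2 * of_int m) \<and>
     \<bar>det B\<bar> = 1 \<and> form_signature B UNIV 3 19"

definition sublattice :: "rvec set \<Rightarrow> bool" where
  "sublattice N \<longleftrightarrow> N \<subseteq> Lint \<and> 0 \<in> N \<and> (\<forall>x\<in>N. \<forall>y\<in>N. x + y \<in> N) \<and> (\<forall>x\<in>N. - x \<in> N)"

definition primitive_sublattice :: "rvec set \<Rightarrow> bool" where
  "primitive_sublattice N \<longleftrightarrow> sublattice N \<and> (\<forall>x\<in>Lint. x \<in> span N \<longrightarrow> x \<in> N)"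

definition orth_compl :: "real^22^22 \<Rightarrow> rvec set \<Rightarrow> rvec set" where
  "orth_compl B N = {x\<in>Lint. \<forall>y\<in>N. bil B x y = 0}"

definition cof :: "rvec \<Rightarrow> cvec" where
  "cof x = (\<chi> i. complex_of_real (x $ i))"

definition cscale :: "complex \<Rightarrow> cvec \<Rightarrow> cvec" where
  "cscale c u = (\<chi> i. c * u $ i)"

definition cconj :: "cvec \<Rightarrow> cvec" where
  "cconj u = (\<chi> i. cnj (u $ i))"

definition bilC :: "real^22^22 \<Rightarrow> cvec \<Rightarrow> cvec \<Rightarrow> complex" where
  "bilC B u v = (\<Sum>i\<in>UNIV. \<Sum>j\<in>UNIV. u $ i * complex_of_real (B $ i $ j) * v $ j)"

text \<open>The complex line through a vector, i.e. a point of the projective space.\<close>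
definition cline :: "cvec \<Rightarrow> cvec set" where
  "cline w = range (\<lambda>c. cscale c w)"

text \<open>Affine cone over D_N: nonzero w in N^perp \<otimes> C with w.w = 0, w.conj w > 0.
  The oriented positive 2-plane <a,b> corresponds to the line of a + i b.\<close>
definition period_cone :: "real^22^22 \<Rightarrow> rvec set \<Rightarrow> cvec set" where
  "period_cone B N = {w. w \<noteq> 0 \<and>
      (\<exists>a b. a \<in> span (orth_compl B N) \<and> b \<in> span (orth_compl B N) \<and>
             w = cof a + cscale \<i> (cof b)) \<and>
      bilC B w w = 0 \<and> Re (bilC B w (cconj w)) > 0}"

definition griffiths_domain :: "real^22^22 \<Rightarrow> rvec set \<Rightarrow> cvec set set" where
  "griffiths_domain B N = cline ` period_cone B N"

definition clinear :: "(cvec \<Rightarrow> cvec) \<Rightarrow> bool" where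
  "clinear L \<longleftrightarrow> linear L \<and> (\<forall>c v. L (cscale c v) = cscale c (L v))"

definition csubmanifold :: "cvec set \<Rightarrow> nat \<Rightarrow> bool" where
  "csubmanifold M d \<longleftrightarrow> d \<le> 22 \<and> (\<forall>p\<in>M. \<exists>U F D.
     open U \<and> p \<in> U \<and>
     (\<forall>z\<in>U. (F has_derivative D z) (at z) \<and> clinear (D z) \<and>
              dim (range (D z)) = 2 * (22 - d)) \<and>
     M \<inter> U = {z\<in>U. F z = (0::cvec)})"

text \<open>A complex analytic submanifold of D_N of positive codimension (given by its set of
  points = lines; its affine cone minus the origin is a complex submanifold of
  dimension less than that of the cone over D_N, namely rank(N^perp) - 1).\<close>
definition analytic_subm_poscodim :: "real^22^22 \<Rightarrow> rvec set \<Rightarrow> cvec set set \<Rightarrow> bool" where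
  "analytic_subm_poscodim B N S \<longleftrightarrow> S \<subseteq> griffiths_domain B N \<and>
     (\<exists>d. csubmanifold (\<Union>S - {0}) d \<and> d < dim (span (orth_compl B N)) - 1)"

definition locally_finite_in_D :: "real^22^22 \<Rightarrow> rvec set \<Rightarrow> cvec set set set \<Rightarrow> bool" where
  "locally_finite_in_D B N F \<longleftrightarrow>
     (\<forall>w\<in>period_cone B N. \<exists>V. open V \<and> w \<in> V \<and> finite {S\<in>F. \<Union>S \<inter> V \<noteq> {}})"

definition amp_cone :: "real^22^22 \<Rightarrow> rvec set \<Rightarrow> rvec set \<Rightarrow> bool" where
  "amp_cone B N Amp \<longleftrightarrow> Amp \<subseteq> span N \<and> openin (top_of_set (span N)) Amp \<and>
     (\<forall>x\<in>Amp. \<forall>t::real. t > 0 \<longrightarrow> t *\<^sub>R x \<in> Amp) \<and>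
     (\<exists>C\<in>components {x\<in>span N. bil B x x > 0}. Amp \<subseteq> C)"

text \<open>A family of building blocks is abstracted by its realisation relation:
  Real P k  means: there is (Z,S) in the family and an N-polarised marking h of S
  with period point P such that h(k) is the restriction of a Kaehler class on Z.\<close>
definition generic_family ::
  "real^22^22 \<Rightarrow> rvec set \<Rightarrow> rvec set \<Rightarrow> (cvec set \<Rightarrow> rvec \<Rightarrow> bool) \<Rightarrow> bool" where
  "generic_family B N Amp Real \<longleftrightarrow>
     (\<exists>U F. U \<subseteq> griffiths_domain B N \<and>
        griffiths_domain B N - U = \<Union>F \<and>
        locally_finite_in_D B N F \<and>
        (\<forall>S\<in>F. analytic_subm_poscodim B N S) \<and>
        (\<forall>P\<in>U. \<forall>k\<in>Amp. Real P k))"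

end

theory Submission
  imports Defs
begin

(* Put R = N+ \<inter> N-, W+ = T- \<inter> N+, W- = T+ \<inter> N- and
   let Q be the orthogonal complement of N+ + N- in L_R.  For nonzero c, a in W-, b in Q
   with a^2, b^2 > 0, the line of c (a + i l b), with l chosen so that (l b)^2 = a^2, is a
   period point for N+; symmetrically c (a' - i l' b) with a' in W+ is one for N-.
   (1) Signature count: Q contains a positive vector, because otherwise R, Q and the
       parts of W+- orthogonal to given ample classes would span a negative semidefinite
       subspace of dimension 20 in a space of signature (3,19).
   (2) Q is spanned by lattice vectors, so it lies in the spans of T+ and T-, and a
       dimension count gives rank T+ \<le> dim W- + dim Q (and symmetrically).
   (3) Rank count: the derivatives of the parametrisation span a complex space of real
       dimension 2 (dim W- + dim Q), so an analytic submanifold of D_N+ of positive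
       codimension contains no open piece of the family: its preimage in parameter space
       is nowhere dense.
   (4) By local finiteness only finitely many such submanifolds come near a base point;
       their preimages cannot cover a neighbourhood, and a parameter outside them yields,
       after normalisation, the required orthonormal triple (k+, k-, k0). *)

lemma bil_add_left: "bil B (x + y) z = bil B x z + bil B y z"
  by (simp add: bil_def inner_add_left)
lemma bil_add_right: "bil B z (x + y) = bil B z x + bil B z y"
  by (simp add: bil_def matrix_vector_right_distrib inner_add_right)
lemma bil_scale_left: "bil B (c *\<^sub>R x) z = c * bil B x z"
  by (simp add: bil_def)
lemma bil_scale_right: "bil B z (c *\<^sub>R x) = c * bil B z x"
  by (simp add: bil_def matrix_vector_mult_scaleR)
lemma bil_diff_left: "bil B (x - y) z = bil B x z - bil B y z"
  by (simp add: bil_def inner_diff_left)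
lemma bil_diff_right: "bil B z (x - y) = bil B z x - bil B z y"
  by (simp add: bil_def matrix_vector_mult_diff_distrib inner_diff_right)
lemma bil_minus_left: "bil B (- x) z = - bil B x z"
  by (simp add: bil_def)
lemma bil_minus_right: "bil B z (- x) = - bil B z x"
  using bil_scale_right[of B z "-1" x] by simp
lemma bil_zero_left [simp]: "bil B 0 z = 0"
  by (simp add: bil_def)
lemma bil_zero_right [simp]: "bil B z 0 = 0"
  by (simp add: bil_def)

lemmas bil_simps = bil_add_left bil_add_right bil_scale_left bil_scale_right
  bil_diff_left bil_diff_right bil_minus_left bil_minus_right

lemma bil_sym:
  assumes "transpose B = B"
  shows "bil B x y = bil B y x"
proof -
  have "bil B x y = (x v* B) \<bullet> y" by (simp add: bil_def dot_lmul_matrix)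
  also have "x v* B = transpose B *v x" by simp
  finally show ?thesis using assms by (simp add: bil_def inner_commute)
qed

lemma linear_bil_right: "linear (bil B x)"
  by (rule linearI) (simp_all add: bil_simps)

lemma linear_bil_left: "linear (\<lambda>x. bil B x y)"
  by (rule linearI) (simp_all add: bil_simps)

lemma continuous_on_bil:
  assumes "continuous_on S f" "continuous_on S g"
  shows "continuous_on S (\<lambda>x. bil B (f x) (g x))"
proof -
  have "bounded_bilinear (\<lambda>x y. x \<bullet> (B *v y))"
    using bounded_bilinear.comp[OF bounded_bilinear_inner bounded_linear_ident
        matrix_vector_mul_bounded_linear[of B]]
    by simp
  then have "bounded_bilinear (bil B)" unfolding bil_def[abs_def] .
  then show ?thesis using assms by (rule bounded_bilinear.continuous_on)
qed

lemma subspace_bil_ker: "subspace {v. bil B a v = 0}"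
  by (auto simp: subspace_def bil_simps)

lemma subspace_bil_perp: "subspace {x. \<forall>y\<in>S. bil B x y = 0}"
  by (auto simp: subspace_def bil_simps)

lemma bil_span_orth:
  assumes "\<forall>x\<in>S. \<forall>y\<in>T. bil B x y = 0" "x \<in> span S" "y \<in> span T"
  shows "bil B x y = 0"
proof -
  have "\<forall>y\<in>T. bil B x y = 0"
  proof
    fix y assume "y \<in> T"
    have "subspace {x. bil B x y = 0}" by (auto simp: subspace_def bil_simps)
    from span_induct[OF assms(2) this] show "bil B x y = 0"
      using assms(1) \<open>y \<in> T\<close> by auto
  qed
  then show ?thesis using span_induct[OF assms(3) subspace_bil_ker[of B x]] by auto
qed

lemma bil_perp_span:
  "{x. \<forall>y\<in>span S. bil B x y = 0} = {x. \<forall>y\<in>S. bil B x y = 0}"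
  using bil_span_orth[of "{_}" S B] by (auto simp: span_base)

lemma nonpos_orthogonal_sum:
  assumes sym: "transpose B = B"
    and X: "\<forall>x\<in>X. bil B x x \<le> 0" and Y: "\<forall>y\<in>Y. bil B y y \<le> 0"
    and XY: "\<forall>x\<in>X. \<forall>y\<in>Y. bil B x y = 0"
    and z: "z \<in> {x + y |x y. x \<in> X \<and> y \<in> Y}"
  shows "bil B z z \<le> 0"
proof -
  obtain x y where xy: "z = x + y" "x \<in> X" "y \<in> Y" using z by blast
  have "bil B z z = bil B x x + bil B y y"
    using XY xy bil_sym[OF sym, of y x] by (simp add: bil_simps)
  then show ?thesis using X Y xy by (smt (verit))
qed

lemma positive_plane:
  assumes sym: "transpose B = B"
    and a: "bil B a a > 0" and x: "bil B x x > 0" and ax: "bil B a x = 0"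
  shows "pos_def_on B (span {a, x})" "dim (span {a, x}) = 2"
proof -
  have xa: "bil B x a = 0" using ax bil_sym[OF sym] by metis
  have "a \<notin> span {x}"
  proof
    assume "a \<in> span {x}"
    then obtain k where k: "a = k *\<^sub>R x" by (auto simp: span_singleton)
    then have "k = 0" using ax x by (simp add: bil_simps)
    then show False using k a by simp
  qed
  moreover have "x \<noteq> 0" using x by auto
  ultimately show "dim (span {a, x}) = 2" by (simp add: dim_insert)
  show "pos_def_on B (span {a, x})"
    unfolding pos_def_on_def
  proof (intro ballI impI)
    fix z assume z: "z \<in> span {a, x}" "z \<noteq> 0"
    then obtain s where "z - s *\<^sub>R a \<in> span {x}" by (auto simp: span_insert)
    then obtain t where "z - s *\<^sub>R a = t *\<^sub>R x" by (auto simp: span_singleton)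
    then have zst: "z = s *\<^sub>R a + t *\<^sub>R x" by (simp add: algebra_simps)
    have "bil B z z = s * s * bil B a a + t * t * bil B x x"
      unfolding zst by (simp add: bil_simps ax xa)
    moreover have "0 < s * s \<or> 0 < t * t"
      using z(2) zst by (metis add_0 not_real_square_gt_zero scaleR_zero_left)
    ultimately show "bil B z z > 0"
      using a x by (smt (verit) mult_pos_pos mult_nonneg_nonneg zero_le_square)
  qed
qed

text \<open>In a space of signature (1,q), the orthogonal complement of a positive vector is
  negative semidefinite: otherwise there would be a positive definite plane.\<close>

lemma hyperbolic_perp_nonpos:
  assumes sym: "transpose B = B" and sig: "form_signature B V 1 q"
    and a: "a \<in> V" "bil B a a > 0" and x: "x \<in> V" "bil B a x = 0"
  shows "bil B x x \<le> 0"
proof (rule ccontr)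
  assume "\<not> bil B x x \<le> 0"
  then have plane: "pos_def_on B (span {a, x})" "dim (span {a, x}) = 2"
    using positive_plane[OF sym a(2) _ x(2)] by auto
  have "subspace V" and maxpos: "\<And>W. subspace W \<Longrightarrow> W \<subseteq> V \<Longrightarrow> pos_def_on B W \<Longrightarrow> dim W \<le> 1"
    using sig by (auto simp: form_signature_def)
  moreover from \<open>subspace V\<close> have "span {a, x} \<subseteq> V"
    using a x by (intro span_minimal) auto
  ultimately show False using plane by fastforce
qed

text \<open>A negative semidefinite subspace meets a positive definite one trivially, which
  bounds its dimension.\<close>

lemma nonpos_subspace_dim:
  assumes sig: "form_signature B UNIV p q"
    and T: "subspace T" "\<forall>t\<in>T. bil B t t \<le> 0"
  shows "dim T + p \<le> 22"
proof -
  obtain P where P: "subspace P" "dim P = p" "pos_def_on B P"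
    using sig unfolding form_signature_def by blast
  have "T \<inter> P \<subseteq> {0}"
    using T(2) P(3) unfolding pos_def_on_def by force
  then have "dim (T \<inter> P) = 0" by simp
  moreover have "dim {x + y |x y. x \<in> T \<and> y \<in> P} + dim (T \<inter> P) = dim T + dim P"
    by (rule dim_sums_Int[OF T(1) P(1)])
  moreover have "dim {x + y |x y. x \<in> T \<and> y \<in> P} \<le> 22"
    using dim_subset_UNIV[of "{x + y |x y. x \<in> T \<and> y \<in> P}"] by simp
  ultimately show ?thesis using P(2) by linarith
qed

lemma dim_bil_perp:
  assumes sym: "transpose B = B" and nd: "\<And>x. (\<forall>y. bil B x y = 0) \<Longrightarrow> x = 0"
  shows "dim {x. \<forall>y\<in>S. bil B x y = 0} + dim (span S) = 22"
proof -
  let ?phi = "(*v) B" and ?P = "{x. \<forall>y\<in>S. bil B x y = 0}"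
    and ?O = "{z. \<forall>y\<in>span S. orthogonal y z}"
  have lin: "linear ?phi" by simp
  have bil_phi: "bil B x y = y \<bullet> ?phi x" for x y
    by (metis bil_def bil_sym[OF sym])
  have "inj ?phi"
    using nd bil_phi lin by (auto simp: linear_injective_0)
  then have bij: "bij ?phi"
    using lin linear_injective_imp_surjective by (auto simp: bij_def)
  have "?P = {x. \<forall>y\<in>span S. bil B x y = 0}"
    by (rule bil_perp_span[symmetric])
  also have "\<dots> = ?phi -` ?O"
    by (auto simp: bil_phi orthogonal_def)
  finally have "?P = ?phi -` ?O" .
  then have "?phi ` ?P = ?O"
    using surj_image_vimage_eq[OF bij_is_surj[OF bij]] by metis
  moreover have "dim (?phi ` ?P) = dim ?P"
    using \<open>inj ?phi\<close> by (intro dim_image_eq[OF lin]) (auto simp: inj_on_def inj_def)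
  moreover have "dim ?O + dim (span S) = 22"
    using dim_subspace_orthogonal_to_vectors[of "span S" UNIV] by (simp add: dim_UNIV DIM_cart)
  ultimately show ?thesis by simp
qed

lemma cof_nth [simp]: "cof x $ i = complex_of_real (x $ i)"
  by (simp add: cof_def)
lemma cscale_nth [simp]: "cscale c u $ i = c * u $ i"
  by (simp add: cscale_def)
lemma cconj_nth [simp]: "cconj u $ i = cnj (u $ i)"
  by (simp add: cconj_def)

lemma cof_add: "cof (x + y) = cof x + cof y"
  by (simp add: vec_eq_iff)
lemma cof_scale: "cof (r *\<^sub>R x) = r *\<^sub>R cof x"
  by (simp add: vec_eq_iff complex_eq_iff)
lemma cof_minus: "cof (- x) = - cof x"
  by (simp add: vec_eq_iff)
lemma cof_0 [simp]: "cof 0 = 0"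
  by (simp add: vec_eq_iff)
lemma linear_cof: "linear cof"
  by (rule linearI) (simp_all add: cof_add cof_scale)
lemma inj_cof: "inj cof"
  by (auto simp: inj_def vec_eq_iff)

lemma cscale_add: "cscale c (u + v) = cscale c u + cscale c v"
  by (simp add: vec_eq_iff algebra_simps)
lemma cscale_add_left: "cscale (c + d) u = cscale c u + cscale d u"
  by (simp add: vec_eq_iff algebra_simps)
lemma cscale_scaleR: "cscale c (r *\<^sub>R u) = r *\<^sub>R cscale c u"
  by (simp add: vec_eq_iff complex_eq_iff)
lemma cscale_cscale: "cscale c (cscale d u) = cscale (c * d) u"
  by (simp add: vec_eq_iff)
lemma cscale_of_real: "cscale (complex_of_real r) u = r *\<^sub>R u"
  by (simp add: vec_eq_iff complex_eq_iff)
lemma cscale_one [simp]: "cscale 1 u = u"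
  by (simp add: vec_eq_iff)
lemma cscale_zero [simp]: "cscale c 0 = 0"
  by (simp add: vec_eq_iff)
lemma cscale_minus: "cscale c (- u) = - cscale c u"
  by (simp add: vec_eq_iff)
lemma cscale_eq_0: "c \<noteq> 0 \<Longrightarrow> cscale c u = 0 \<longleftrightarrow> u = 0"
  by (simp add: vec_eq_iff)
lemma linear_cscale: "linear (cscale c)"
  by (rule linearI) (simp_all add: cscale_add cscale_scaleR)

lemma cscale_decomp: "cscale c u = Re c *\<^sub>R u + Im c *\<^sub>R cscale \<i> u"
  by (simp add: vec_eq_iff complex_eq_iff)

lemma cof_re_im_eq:
  assumes "cof x1 + cscale \<i> (cof y1) = cof x2 + cscale \<i> (cof y2)"
  shows "x1 = x2 \<and> y1 = y2"
proof -
  have "\<And>i. complex_of_real (x1$i) + \<i> * complex_of_real (y1$i)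
          = complex_of_real (x2$i) + \<i> * complex_of_real (y2$i)"
    using assms by (simp add: vec_eq_iff)
  then have "\<And>i. x1$i = x2$i \<and> y1$i = y2$i" by (simp add: complex_eq_iff)
  then show ?thesis by (simp add: vec_eq_iff)
qed

lemma bilC_cof: "bilC B (cof x) (cof y) = complex_of_real (bil B x y)"
proof -
  have "bil B x y = (\<Sum>i\<in>UNIV. \<Sum>j\<in>UNIV. x $ i * B $ i $ j * y $ j)"
    by (simp add: bil_def inner_vec_def matrix_vector_mult_def sum_distrib_left mult.assoc)
  then show ?thesis by (simp add: bilC_def)
qed

lemma bilC_add_left: "bilC B (u + v) w = bilC B u w + bilC B v w"
  by (simp add: bilC_def algebra_simps sum.distrib)
lemma bilC_add_right: "bilC B w (u + v) = bilC B w u + bilC B w v"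
  by (simp add: bilC_def algebra_simps sum.distrib)
lemma bilC_cscale_left: "bilC B (cscale c u) w = c * bilC B u w"
  by (simp add: bilC_def sum_distrib_left mult.assoc)
lemma bilC_cscale_right: "bilC B w (cscale c u) = c * bilC B w u"
  by (simp add: bilC_def sum_distrib_left algebra_simps)

lemma period_cone_memI:
  assumes sym: "transpose B = B"
    and a: "a \<in> span (orth_compl B N)" and b: "b \<in> span (orth_compl B N)"
    and aa: "bil B a a = bil B b b" "bil B a a > 0" and ab: "bil B a b = 0"
  shows "cof a + cscale \<i> (cof b) \<in> period_cone B N"
proof -
  let ?w = "cof a + cscale \<i> (cof b)"
  have ba: "bil B b a = 0" using ab bil_sym[OF sym] by metis
  have conj: "cconj ?w = cof a + cscale (- \<i>) (cof b)"
    by (simp add: vec_eq_iff)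
  note bilC_simps = bilC_add_left bilC_add_right bilC_cscale_left bilC_cscale_right bilC_cof
  have isotropic: "bilC B ?w ?w = 0"
    by (simp add: bilC_simps aa ab ba)
  have "bilC B ?w (cconj ?w) = complex_of_real (2 * bil B a a)"
    unfolding conj by (simp add: bilC_simps aa ab ba)
  then have positive: "Re (bilC B ?w (cconj ?w)) > 0" using aa by simp
  have "?w \<noteq> 0"
  proof
    assume "?w = 0"
    then have "bilC B ?w (cconj ?w) = 0" by (simp add: bilC_def)
    then show False using positive by simp
  qed
  then show ?thesis unfolding period_cone_def using isotropic positive a b by blast
qed

definition complexify :: "rvec set \<Rightarrow> cvec set" where
  "complexify E = {cof x + cscale \<i> (cof y) |x y. x \<in> E \<and> y \<in> E}"

lemma complexify:
  assumes E: "subspace E"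
  shows "subspace (complexify E)" "dim (complexify E) = 2 * dim E"
proof -
  let ?C1 = "cof ` E" and ?C2 = "(\<lambda>y. cscale \<i> (cof y)) ` E"
  have lin2: "linear (\<lambda>y. cscale \<i> (cof y))"
    using linear_compose[OF linear_cof linear_cscale] by (simp add: o_def)
  have inj2: "inj (\<lambda>y. cscale \<i> (cof y))"
    using inj_cof cscale_eq_0[of \<i>] by (auto simp: inj_def cscale_cscale vec_eq_iff)
  have sC1: "subspace ?C1" and sC2: "subspace ?C2"
    using linear_subspace_image[OF linear_cof E] linear_subspace_image[OF lin2 E] .
  have dC1: "dim ?C1 = dim E"
    by (rule dim_image_eq[OF linear_cof]) (use inj_cof in \<open>auto simp: inj_on_def inj_def\<close>)
  have dC2: "dim ?C2 = dim E"
    by (rule dim_image_eq[OF lin2]) (use inj2 in \<open>auto simp: inj_on_def inj_def\<close>)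
  have "?C1 \<inter> ?C2 \<subseteq> {0}"
  proof
    fix z assume "z \<in> ?C1 \<inter> ?C2"
    then obtain x y where "z = cof x" "z = cscale \<i> (cof y)" by blast
    then show "z \<in> {0}" using cof_re_im_eq[of x 0 0 y] by simp
  qed
  then have "dim (?C1 \<inter> ?C2) = 0" by simp
  moreover have "dim {p + q |p q. p \<in> ?C1 \<and> q \<in> ?C2} + dim (?C1 \<inter> ?C2) = dim ?C1 + dim ?C2"
    by (rule dim_sums_Int[OF sC1 sC2])
  ultimately have "dim {p + q |p q. p \<in> ?C1 \<and> q \<in> ?C2} = 2 * dim E"
    using dC1 dC2 by linarith
  moreover have eq: "complexify E = {p + q |p q. p \<in> ?C1 \<and> q \<in> ?C2}"
    unfolding complexify_def by blast
  ultimately show "dim (complexify E) = 2 * dim E" by simp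
  show "subspace (complexify E)" unfolding eq by (rule subspace_sums[OF sC1 sC2])
qed

lemma dim_ker_range:
  fixes f :: "cvec \<Rightarrow> cvec"
  assumes "linear f"
  shows "dim {x. f x = 0} + dim (range f) \<le> 44"
proof -
  let ?K = "{x. f x = 0}"
  have sK: "subspace ?K"
    using assms by (auto simp: subspace_def linear_add linear_scale linear_0)
  let ?P = "{y \<in> UNIV. \<forall>x \<in> ?K. orthogonal x y}"
  have d: "dim ?P + dim ?K = 44"
    using dim_subspace_orthogonal_to_vectors[of ?K UNIV] sK by (simp add: dim_UNIV)
  have "range f \<subseteq> f ` ?P"
  proof
    fix z assume "z \<in> range f"
    then obtain x where x: "z = f x" by auto
    obtain y w where yw: "x = y + w" "y \<in> span ?K" and orth: "\<And>v. v \<in> span ?K \<Longrightarrow> orthogonal w v"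
      using orthogonal_subspace_decomp_exists[of ?K x] by blast
    have spK: "span ?K = ?K" using sK by (simp add: span_eq_iff)
    then have "y \<in> ?K" using yw(2) by blast
    then have "f x = f w" using yw(1) assms by (simp add: linear_add)
    moreover have "w \<in> ?P"
      using orth spK orthogonal_commute by auto
    ultimately show "z \<in> f ` ?P" using x by auto
  qed
  then have "dim (range f) \<le> dim (f ` ?P)" by (rule dim_subset)
  also have "\<dots> \<le> dim ?P" using assms by (rule dim_image_le)
  finally show ?thesis using d by linarith
qed

lemma dim_sum_le:
  fixes X Y :: "rvec set"
  assumes "subspace X" "subspace Y"
  shows "dim {x + y |x y. x \<in> X \<and> y \<in> Y} \<le> dim X + dim Y"
  using dim_sums_Int[OF assms] by linarith

lemma dim_hyperplane_section:
  fixes f :: "rvec \<Rightarrow> real"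
  assumes "subspace S" "linear f"
  shows "dim S \<le> dim (S \<inter> {x. f x = 0}) + 1"
proof (cases "\<exists>s\<in>S. f s \<noteq> 0")
  case False
  then have "S \<inter> {x. f x = 0} = S" by auto
  then show ?thesis by simp
next
  case True
  then obtain s where s: "s \<in> S" "f s \<noteq> 0" by auto
  let ?T = "S \<inter> {x. f x = 0}"
  have "S \<subseteq> span (insert s ?T)"
  proof
    fix x assume x: "x \<in> S"
    let ?y = "x - (f x / f s) *\<^sub>R s"
    have "?y \<in> ?T" using assms x s by (simp add: linear_diff linear_scale subspace_diff subspace_scale)
    then have "?y + (f x / f s) *\<^sub>R s \<in> span (insert s ?T)"
      by (intro span_add) (simp_all add: span_base span_scale)
    then show "x \<in> span (insert s ?T)" by simp
  qed
  then have "dim S \<le> dim (span (insert s ?T))" by (rule dim_subset)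
  also have "\<dots> \<le> dim ?T + 1" by (simp add: dim_insert)
  finally show ?thesis .
qed

text \<open>A complex-linear map vanishing on the complexification of E and on a vector x + i y
  with x not in E + R y has a kernel of real dimension at least 2 dim E + 2, namely the
  complexification of E together with the complex line of x + i y.\<close>

lemma dim_kernel_ge_complexified:
  assumes D: "clinear D" and E: "subspace E" and DE: "\<forall>v\<in>E. D (cof v) = 0"
    and xy: "\<forall>t. x - t *\<^sub>R y \<notin> E" and Dw: "D (cof x + cscale \<i> (cof y)) = 0"
  shows "2 * dim E + 2 \<le> dim {z. D z = 0}"
proof -
  have lD: "linear D" and cD: "\<And>c v. D (cscale c v) = cscale c (D v)"
    using D by (auto simp: clinear_def)
  let ?K = "{z. D z = 0}" and ?S = "complexify E"
  have spS: "span ?S = ?S" using complexify(1)[OF E] by (simp add: span_eq_iff)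
  have Smem: "z \<in> ?S \<longleftrightarrow> (\<exists>x y. x \<in> E \<and> y \<in> E \<and> z = cof x + cscale \<i> (cof y))" for z
    unfolding complexify_def by blast
  have SK: "?S \<subseteq> ?K"
    using DE lD cD by (auto simp: complexify_def linear_add)
  let ?w = "cof x + cscale \<i> (cof y)"
  let ?iw = "cscale \<i> ?w"
  have w_nS: "?w \<notin> span ?S"
  proof
    assume "?w \<in> span ?S"
    then obtain x' y' where "x' \<in> E" "?w = cof x' + cscale \<i> (cof y')"
      using spS Smem by auto
    then show False using cof_re_im_eq[of x y x' y'] xy[rule_format, of 0] by simp
  qed
  have iw_nS: "?iw \<notin> span (insert ?w ?S)"
  proof
    assume "?iw \<in> span (insert ?w ?S)"
    then obtain k where "?iw - k *\<^sub>R ?w \<in> ?S" using spS by (auto simp: span_insert)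
    then obtain x' y' where xy': "y' \<in> E" "?iw - k *\<^sub>R ?w = cof x' + cscale \<i> (cof y')"
      using Smem by auto
    have "?iw - k *\<^sub>R ?w = cof (- y - k *\<^sub>R x) + cscale \<i> (cof (x - k *\<^sub>R y))"
      by (simp add: vec_eq_iff complex_eq_iff algebra_simps)
    then have "x - k *\<^sub>R y = y'"
      using xy'(2) cof_re_im_eq[of "- y - k *\<^sub>R x" "x - k *\<^sub>R y" x' y'] by simp
    then show False using xy xy'(1) by blast
  qed
  have "insert ?iw (insert ?w ?S) \<subseteq> ?K" using SK Dw cD by auto
  then have "dim (insert ?iw (insert ?w ?S)) \<le> dim ?K" by (rule dim_subset)
  moreover have "dim (insert ?iw (insert ?w ?S)) = dim ?S + 2"
    using w_nS iw_nS by (simp add: dim_insert)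
  ultimately show ?thesis using complexify(2)[OF E] by simp
qed

lemma transversal_hyperplanes:
  assumes sW: "subspace W" and sQ: "subspace Q" and WQ: "W \<inter> Q = {0}"
    and a: "a \<in> W" and b: "b \<in> Q" and aa: "bil B a a \<noteq> 0"
  defines "E \<equiv> {v + u |v u. v \<in> W \<inter> {v. bil B a v = 0} \<and> u \<in> Q \<inter> {u. bil B b u = 0}}"
  shows "subspace E" "dim W + dim Q \<le> dim E + 2" "\<forall>t. a - t *\<^sub>R b \<notin> E"
proof -
  let ?EW = "W \<inter> {v. bil B a v = 0}" and ?EQ = "Q \<inter> {v. bil B b v = 0}"
  have sEW: "subspace ?EW" and sEQ: "subspace ?EQ"
    using subspace_inter[OF sW subspace_bil_ker] subspace_inter[OF sQ subspace_bil_ker] by blast+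
  show "subspace E" unfolding E_def by (rule subspace_sums[OF sEW sEQ])
  have "?EW \<inter> ?EQ \<subseteq> {0}" using WQ by blast
  then have "dim (?EW \<inter> ?EQ) = 0" by simp
  moreover have "dim E + dim (?EW \<inter> ?EQ) = dim ?EW + dim ?EQ"
    unfolding E_def by (rule dim_sums_Int[OF sEW sEQ])
  moreover have "dim W \<le> dim ?EW + 1" "dim Q \<le> dim ?EQ + 1"
    using dim_hyperplane_section[OF sW linear_bil_right[of B a]]
      dim_hyperplane_section[OF sQ linear_bil_right[of B b]] by simp_all
  ultimately show "dim W + dim Q \<le> dim E + 2" by linarith
  show "\<forall>t. a - t *\<^sub>R b \<notin> E"
  proof (intro allI notI)
    fix t assume "a - t *\<^sub>R b \<in> E"
    then obtain v u where vu: "a - t *\<^sub>R b = v + u" "v \<in> ?EW" "u \<in> ?EQ"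
      unfolding E_def by blast
    have "a - v = u + t *\<^sub>R b" using vu(1) by (simp add: algebra_simps)
    moreover have "a - v \<in> W" using a vu(2) sW subspace_diff by blast
    moreover have "u + t *\<^sub>R b \<in> Q" using vu(3) b sQ by (simp add: subspace_add subspace_scale)
    ultimately have "a - v \<in> W \<inter> Q" by simp
    then have "a = v" using WQ by simp
    then show False using vu(2) aa by simp
  qed
qed

section \<open>The period map\<close>

text \<open>For a in W and b in Q with a^2, b^2 > 0, the vector a + i (norm_ratio a b) b has real
  and imaginary parts of equal square, so (up to the complex scalar c) it represents a
  period point; period_map is the resulting parametrisation of the affine period cone.\<close>

definition norm_ratio :: "real^22^22 \<Rightarrow> rvec \<Rightarrow> rvec \<Rightarrow> real" where
  "norm_ratio B a b = sqrt (bil B a a / bil B b b)"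

definition period_map :: "real^22^22 \<Rightarrow> complex \<Rightarrow> rvec \<Rightarrow> rvec \<Rightarrow> cvec" where
  "period_map B c a b = cscale c (cof a + cscale \<i> (cof (norm_ratio B a b *\<^sub>R b)))"

lemma period_map_in_period_cone:
  assumes sym: "transpose B = B"
    and a: "a \<in> span (orth_compl B N)" and b: "b \<in> span (orth_compl B N)"
    and aa: "bil B a a > 0" and bb: "bil B b b > 0" and ab: "bil B a b = 0"
  shows "period_map B 1 a b \<in> period_cone B N"
proof -
  let ?l = "norm_ratio B a b"
  have "?l * ?l = bil B a a / bil B b b"
    unfolding norm_ratio_def using aa bb by simp
  then have "bil B (?l *\<^sub>R b) (?l *\<^sub>R b) = bil B a a"
    using bb by (simp add: bil_simps mult.assoc[symmetric])
  then have "cof a + cscale \<i> (cof (?l *\<^sub>R b)) \<in> period_cone B N"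
    by (intro period_cone_memI[OF sym a span_scale[OF b]]) (simp_all add: aa bil_simps ab)
  then show ?thesis by (simp add: period_map_def vec_eq_iff)
qed

text \<open>Since the real part a of a period vector is nonzero, so is every value.\<close>

lemma period_map_nonzero:
  assumes "c \<noteq> 0" "a \<noteq> 0"
  shows "period_map B c a b \<noteq> 0"
proof
  assume "period_map B c a b = 0"
  then have "cof a + cscale \<i> (cof (norm_ratio B a b *\<^sub>R b)) = cof 0 + cscale \<i> (cof 0)"
    using assms(1) cscale_eq_0 unfolding period_map_def by simp
  then show False using cof_re_im_eq assms(2) by blast
qed

definition normalise :: "real^22^22 \<Rightarrow> rvec \<Rightarrow> rvec" where
  "normalise B x = (1 / sqrt (bil B x x)) *\<^sub>R x"

lemma normalise_square: "bil B x x > 0 \<Longrightarrow> bil B (normalise B x) (normalise B x) = 1"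
  unfolding normalise_def by (simp add: bil_simps power2_eq_square[symmetric])

lemma period_map_normalise:
  assumes aa: "bil B a a > 0" and bb: "bil B b b > 0"
  shows "period_map B c a b = cscale (c * complex_of_real (sqrt (bil B a a)))
            (cof (normalise B a) + cscale \<i> (cof (normalise B b)))"
proof -
  have l: "norm_ratio B a b = sqrt (bil B a a) / sqrt (bil B b b)"
    unfolding norm_ratio_def by (simp add: real_sqrt_divide)
  have "cof a + cscale \<i> (cof (norm_ratio B a b *\<^sub>R b))
      = sqrt (bil B a a) *\<^sub>R (cof (normalise B a) + cscale \<i> (cof (normalise B b)))"
    using aa bb unfolding l normalise_def by (simp add: cof_scale cscale_scaleR scaleR_add_right)
  then show ?thesis
    by (simp add: period_map_def cscale_of_real[symmetric] cscale_cscale)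
qed

lemma continuous_on_period_map:
  fixes S :: "'a::euclidean_space set"
  assumes c: "continuous_on S c" and f: "continuous_on S f" and g: "continuous_on S g"
    and nz: "\<And>x. x \<in> S \<Longrightarrow> bil B (g x) (g x) \<noteq> 0"
  shows "continuous_on S (\<lambda>x. period_map B (c x) (f x) (g x))"
proof -
  have lin_cont: "continuous_on S (\<lambda>x. L (h x))" if "linear L" "continuous_on S h"
    for L :: "'b::euclidean_space \<Rightarrow> 'c::real_normed_vector" and h
    using linear_continuous_on[OF linear_conv_bounded_linear[THEN iffD1, OF that(1)]] that(2)
    by (rule continuous_on_compose2) auto
  have cl: "continuous_on S (\<lambda>x. norm_ratio B (f x) (g x))"
    unfolding norm_ratio_def
    by (intro continuous_on_real_sqrt continuous_on_divide continuous_on_bil f g) (use nz in auto)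
  let ?w = "\<lambda>x. cof (f x) + cscale \<i> (cof (norm_ratio B (f x) (g x) *\<^sub>R g x))"
  have cw: "continuous_on S ?w"
    by (intro continuous_intros lin_cont[OF linear_cof] lin_cont[OF linear_cscale] f cl g)
  have "continuous_on S (\<lambda>x. Re (c x) *\<^sub>R ?w x + Im (c x) *\<^sub>R cscale \<i> (?w x))"
    by (intro continuous_intros lin_cont[OF linear_cscale] cw c)
  then show ?thesis
    unfolding period_map_def cscale_decomp[symmetric] .
qed

lemma curve_deriv:
  fixes X Y P :: cvec
  assumes "(g has_real_derivative g0) (at 0)" "(f has_real_derivative f0) (at 0)"
  shows "((\<lambda>t. P + g t *\<^sub>R X + f t *\<^sub>R Y) has_derivative (\<lambda>t. t *\<^sub>R (g0 *\<^sub>R X + f0 *\<^sub>R Y))) (at 0)"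
  using assms unfolding has_field_derivative_def
  by (auto intro!: derivative_eq_intros simp: algebra_simps)

lemma period_map_deriv_scalar:
  "((\<lambda>t. period_map B (c + complex_of_real t) a b) has_derivative
     (\<lambda>t. t *\<^sub>R period_map B 1 a b)) (at 0)"
proof -
  have "period_map B (c + complex_of_real t) a b = period_map B c a b + t *\<^sub>R period_map B 1 a b" for t
    unfolding period_map_def by (simp add: cscale_add_left cscale_of_real)
  moreover have "((\<lambda>t. period_map B c a b + t *\<^sub>R period_map B 1 a b) has_derivative
      (\<lambda>t. t *\<^sub>R period_map B 1 a b)) (at 0)"
    by (auto intro!: derivative_eq_intros)
  ultimately show ?thesis by simp
qed

lemma period_map_deriv_first:
  assumes sym: "transpose B = B" and av: "bil B a v = 0"
    and aa: "bil B a a > 0" and bb: "bil B b b > 0"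
  shows "((\<lambda>t. period_map B c (a + t *\<^sub>R v) b) has_derivative (\<lambda>t. t *\<^sub>R cscale c (cof v))) (at 0)"
proof -
  let ?P = "cscale c (cof a)" and ?X = "cscale c (cof v)" and ?Y = "cscale c (cscale \<i> (cof b))"
  let ?f = "\<lambda>t. sqrt ((bil B a a + t\<^sup>2 * bil B v v) / bil B b b)"
  have va: "bil B v a = 0" using av bil_sym[OF sym] by metis
  have "norm_ratio B (a + t *\<^sub>R v) b = ?f t" for t
    unfolding norm_ratio_def by (simp add: bil_simps av va power2_eq_square)
  then have eq: "period_map B c (a + t *\<^sub>R v) b = ?P + t *\<^sub>R ?X + ?f t *\<^sub>R ?Y" for t
    unfolding period_map_def by (simp add: cof_add cof_scale cscale_add cscale_scaleR)
  have "(?f has_real_derivative 0) (at 0)"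
    using aa bb by (auto intro!: derivative_eq_intros dest: divide_pos_pos[of "bil B a a" "bil B b b"])
  from curve_deriv[OF DERIV_ident this] show ?thesis unfolding eq by simp
qed

lemma period_map_deriv_second:
  assumes sym: "transpose B = B" and bu: "bil B b u = 0"
    and aa: "bil B a a > 0" and bb: "bil B b b > 0"
  shows "((\<lambda>t. period_map B c a (b + t *\<^sub>R u)) has_derivative
           (\<lambda>t. t *\<^sub>R (norm_ratio B a b *\<^sub>R cscale c (cscale \<i> (cof u))))) (at 0)"
proof -
  let ?P = "cscale c (cof a)" and ?X = "cscale c (cscale \<i> (cof b))"
    and ?Y = "cscale c (cscale \<i> (cof u))"
  let ?f = "\<lambda>t. sqrt (bil B a a / (bil B b b + t\<^sup>2 * bil B u u))"
  have ub: "bil B u b = 0" using bu bil_sym[OF sym] by metis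
  have "norm_ratio B a (b + t *\<^sub>R u) = ?f t" for t
    unfolding norm_ratio_def by (simp add: bil_simps bu ub power2_eq_square)
  then have eq: "period_map B c a (b + t *\<^sub>R u) = ?P + ?f t *\<^sub>R ?X + (t * ?f t) *\<^sub>R ?Y" for t
    unfolding period_map_def
    by (simp add: cof_add cof_scale cscale_add cscale_scaleR scaleR_add_right add.assoc)
  have f': "(?f has_real_derivative 0) (at 0)"
    using aa bb by (auto intro!: derivative_eq_intros dest: divide_pos_pos[of "bil B a a" "bil B b b"])
  have "((\<lambda>t. t * ?f t) has_real_derivative norm_ratio B a b) (at 0)"
    using DERIV_mult[OF DERIV_ident f'] by (simp add: norm_ratio_def)
  from curve_deriv[OF f' this] show ?thesis unfolding eq by simp
qed

lemma deriv_zero_curve: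
  fixes \<gamma> :: "real \<Rightarrow> cvec" and F :: "cvec \<Rightarrow> cvec"
  assumes g: "(\<gamma> has_derivative (\<lambda>t. t *\<^sub>R Z)) (at 0)"
    and F: "(F has_derivative D) (at (\<gamma> 0))" and lD: "linear D"
    and ev: "eventually (\<lambda>t. F (\<gamma> t) = 0) (nhds 0)"
  shows "D Z = 0"
proof -
  have h1: "((\<lambda>t. F (\<gamma> t)) has_derivative (\<lambda>t. D (t *\<^sub>R Z))) (at 0)"
    using has_derivative_compose[OF g F] .
  have "F (\<gamma> 0) = 0" using ev eventually_nhds_x_imp_x by blast
  moreover have "eventually (\<lambda>t. (\<lambda>t. 0::cvec) t = F (\<gamma> t)) (at 0 within UNIV)"
    using ev by (simp add: eventually_at_filter eventually_mono)
  ultimately have h2: "((\<lambda>t. F (\<gamma> t)) has_derivative (\<lambda>t. 0)) (at 0)"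
    using has_derivative_transform_eventually[OF has_derivative_const] by fastforce
  have "(\<lambda>t. D (t *\<^sub>R Z)) = (\<lambda>t. 0)" using has_derivative_unique[OF h1 h2] .
  then have "D (1 *\<^sub>R Z) = 0" by meson
  then show ?thesis by simp
qed

text \<open>Suppose F is a local defining map of a complex submanifold of
  dimension d (so its derivative D is complex linear of real rank 2(22 - d)) and F vanishes
  on the period map near (c, a, b) along all three kinds of curves.  Then D kills the
  complexification of a^perp in W plus b^perp in Q, and the complex line of the period
  vector itself, so 2 (dim W + dim Q) is at most 2 d + 2.\<close>

lemma period_family_not_in_submanifold:
  fixes F D :: "cvec \<Rightarrow> cvec"
  assumes sym: "transpose B = B"
    and sW: "subspace W" and sQ: "subspace Q" and WQ: "W \<inter> Q = {0}"
    and a: "a \<in> W" "bil B a a > 0" and b: "b \<in> Q" "bil B b b > 0" and c: "c \<noteq> 0"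
    and F: "(F has_derivative D) (at (period_map B c a b))" and cl: "clinear D"
    and rk: "dim (range D) = 2 * (22 - d)" and d22: "d \<le> 22" and dd: "d + 1 < dim W + dim Q"
    and Z1: "eventually (\<lambda>t. F (period_map B (c + complex_of_real t) a b) = 0) (nhds 0)"
    and Z2: "\<And>v. v \<in> W \<Longrightarrow> bil B a v = 0 \<Longrightarrow>
               eventually (\<lambda>t. F (period_map B c (a + t *\<^sub>R v) b) = 0) (nhds 0)"
    and Z3: "\<And>u. u \<in> Q \<Longrightarrow> bil B b u = 0 \<Longrightarrow>
               eventually (\<lambda>t. F (period_map B c a (b + t *\<^sub>R u)) = 0) (nhds 0)"
  shows False
proof -
  have lD: "linear D" and cD: "\<And>c v. D (cscale c v) = cscale c (D v)"
    using cl by (auto simp: clinear_def)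
  let ?l = "norm_ratio B a b"
  have l_pos: "?l > 0" unfolding norm_ratio_def using a b by simp
  have F': "(F has_derivative D) (at (period_map B c' a' b'))"
    if "c' = c" "a' = a" "b' = b" for c' a' b' using F that by simp
  have "D (period_map B 1 a b) = 0"
    using deriv_zero_curve[OF period_map_deriv_scalar F' lD Z1] by simp
  then have Dw: "D (cof a + cscale \<i> (cof (?l *\<^sub>R b))) = 0"
    by (simp add: period_map_def)
  have DW: "D (cof v) = 0" if "v \<in> W" "bil B a v = 0" for v
  proof -
    have "D (cscale c (cof v)) = 0"
      using deriv_zero_curve[OF period_map_deriv_first[OF sym that(2) a(2) b(2)] F' lD Z2[OF that]]
      by simp
    then show ?thesis using c cD cscale_eq_0 by metis
  qed
  have DQ: "D (cof u) = 0" if "u \<in> Q" "bil B b u = 0" for u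
  proof -
    have "D (?l *\<^sub>R cscale c (cscale \<i> (cof u))) = 0"
      using deriv_zero_curve[OF period_map_deriv_second[OF sym that(2) a(2) b(2)] F' lD Z3[OF that]]
      by simp
    then have "cscale (c * \<i>) (D (cof u)) = 0"
      using l_pos cD lD by (simp add: linear_scale cscale_cscale)
    then show ?thesis using c cscale_eq_0[of "c * \<i>"] by simp
  qed
  define E where "E = {v + u |v u. v \<in> W \<inter> {v. bil B a v = 0} \<and> u \<in> Q \<inter> {u. bil B b u = 0}}"
  have E: "subspace E" "dim W + dim Q \<le> dim E + 2" "\<forall>t. a - t *\<^sub>R b \<notin> E"
    using transversal_hyperplanes[OF sW sQ WQ a(1) b(1)] a(2) unfolding E_def by auto
  have "\<forall>v\<in>E. D (cof v) = 0"
    using DW DQ lD by (auto simp: E_def cof_add linear_add)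
  moreover have "\<forall>t. a - t *\<^sub>R (?l *\<^sub>R b) \<notin> E" using E(3) by simp
  ultimately have "2 * dim E + 2 \<le> dim {z. D z = 0}"
    using dim_kernel_ge_complexified[OF cl E(1) _ _ Dw] by blast
  moreover have "dim {z. D z = 0} + dim (range D) \<le> 44" by (rule dim_ker_range[OF lD])
  ultimately show False using E(2) rk d22 dd by linarith
qed

section \<open>Nowhere dense sets of parameters\<close>

definition nowhere_dense_in :: "'a::topological_space set \<Rightarrow> 'a set \<Rightarrow> bool" where
  "nowhere_dense_in G0 X \<longleftrightarrow>
     (\<forall>G. open G \<and> G \<noteq> {} \<and> G \<subseteq> G0 \<longrightarrow> (\<exists>G'. open G' \<and> G' \<noteq> {} \<and> G' \<subseteq> G \<and> G' \<inter> X = {}))"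

lemma nowhere_dense_Un:
  assumes X: "nowhere_dense_in G0 X" and Y: "nowhere_dense_in G0 Y"
  shows "nowhere_dense_in G0 (X \<union> Y)"
  unfolding nowhere_dense_in_def
proof (intro allI impI)
  fix G assume G: "open G \<and> G \<noteq> {} \<and> G \<subseteq> G0"
  then obtain G1 where G1: "open G1" "G1 \<noteq> {}" "G1 \<subseteq> G" "G1 \<inter> X = {}"
    using X unfolding nowhere_dense_in_def by meson
  then obtain G2 where "open G2" "G2 \<noteq> {}" "G2 \<subseteq> G1" "G2 \<inter> Y = {}"
    using Y G unfolding nowhere_dense_in_def by (meson order_trans)
  then show "\<exists>G'. open G' \<and> G' \<noteq> {} \<and> G' \<subseteq> G \<and> G' \<inter> (X \<union> Y) = {}"
    using G1 by blast
qed

lemma nowhere_dense_UN: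
  assumes "finite J" "\<forall>j\<in>J. nowhere_dense_in G0 (X j)"
  shows "nowhere_dense_in G0 (\<Union>j\<in>J. X j)"
  using assms
proof (induction J)
  case empty
  show ?case unfolding nowhere_dense_in_def by blast
next
  case (insert j J)
  then show ?case by (simp add: nowhere_dense_Un)
qed

lemma nowhere_dense_subset:
  assumes "nowhere_dense_in G0 X" "Y \<inter> G0 \<subseteq> X"
  shows "nowhere_dense_in G0 Y"
  unfolding nowhere_dense_in_def
proof (intro allI impI)
  fix G assume G: "open G \<and> G \<noteq> {} \<and> G \<subseteq> G0"
  then obtain G' where G': "open G'" "G' \<noteq> {}" "G' \<subseteq> G" "G' \<inter> X = {}"
    using assms(1) unfolding nowhere_dense_in_def by meson
  then have "G' \<inter> Y = {}" using G assms(2) by blast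
  then show "\<exists>G'. open G' \<and> G' \<noteq> {} \<and> G' \<subseteq> G \<and> G' \<inter> Y = {}" using G' by blast
qed

lemma nowhere_dense_misses:
  assumes "nowhere_dense_in G0 X" "open G0" "G0 \<noteq> {}"
  shows "\<exists>x\<in>G0. x \<notin> X"
  using assms unfolding nowhere_dense_in_def by blast

lemma nowhere_dense_locally_finite:
  assumes fin: "finite {S\<in>F. \<Union>S \<inter> V \<noteq> {}}"
    and into: "\<forall>p\<in>G0. \<Psi> p \<in> V \<and> \<Psi> p \<noteq> 0"
    and nd: "\<forall>S\<in>F. \<Union>S \<inter> V \<noteq> {} \<longrightarrow> nowhere_dense_in G0 {p. \<Psi> p \<in> \<Union>S - {0}}"
  shows "nowhere_dense_in G0 {p. \<exists>S\<in>F. \<Psi> p \<in> \<Union>S}"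
proof (rule nowhere_dense_subset)
  show "nowhere_dense_in G0 (\<Union>S\<in>{S\<in>F. \<Union>S \<inter> V \<noteq> {}}. {p. \<Psi> p \<in> \<Union>S - {0}})"
    using fin nd by (intro nowhere_dense_UN) auto
  show "{p. \<exists>S\<in>F. \<Psi> p \<in> \<Union>S} \<inter> G0 \<subseteq> (\<Union>S\<in>{S\<in>F. \<Union>S \<inter> V \<noteq> {}}. {p. \<Psi> p \<in> \<Union>S - {0}})"
  proof
    fix p assume "p \<in> {p. \<exists>S\<in>F. \<Psi> p \<in> \<Union>S} \<inter> G0"
    then obtain S where "S \<in> F" "\<Psi> p \<in> \<Union>S" "\<Psi> p \<in> V" "\<Psi> p \<noteq> 0" using into by blast
    then show "p \<in> (\<Union>S\<in>{S\<in>F. \<Union>S \<inter> V \<noteq> {}}. {p. \<Psi> p \<in> \<Union>S - {0}})" by blast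
  qed
qed

lemma eventually_line:
  fixes g h :: "'p::real_normed_vector"
  assumes "open G1" "g \<in> G1"
  shows "eventually (\<lambda>t::real. g + t *\<^sub>R h \<in> G1) (nhds 0)"
proof -
  have "continuous (at 0) (\<lambda>t::real. g + t *\<^sub>R h)" by (intro continuous_intros)
  then have "((\<lambda>t::real. g + t *\<^sub>R h) \<longlongrightarrow> g) (nhds 0)"
    by (simp add: continuous_at tendsto_nhds_iff)
  then show ?thesis using assms topological_tendstoD by blast
qed

lemma preimage_submanifold_nowhere_dense:
  fixes \<Psi> :: "'p::real_normed_vector \<Rightarrow> cvec"
  assumes cont: "continuous_on G0 \<Psi>" and oG0: "open G0" and M: "csubmanifold M d"
    and no_open: "\<And>G1 F D. open G1 \<Longrightarrow> G1 \<noteq> {} \<Longrightarrow> G1 \<subseteq> G0 \<Longrightarrow>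
        (\<forall>x\<in>G1. (F has_derivative D (\<Psi> x)) (at (\<Psi> x)) \<and> clinear (D (\<Psi> x))
                 \<and> dim (range (D (\<Psi> x))) = 2 * (22 - d)) \<Longrightarrow>
        (\<forall>x\<in>G1. F (\<Psi> x) = 0) \<Longrightarrow> False"
  shows "nowhere_dense_in G0 {x. \<Psi> x \<in> M}"
  unfolding nowhere_dense_in_def
proof (intro allI impI)
  fix G assume G: "open G \<and> G \<noteq> {} \<and> G \<subseteq> G0"
  show "\<exists>G'. open G' \<and> G' \<noteq> {} \<and> G' \<subseteq> G \<and> G' \<inter> {x. \<Psi> x \<in> M} = {}"
  proof (cases "\<forall>x\<in>G. \<Psi> x \<notin> M")
    case True then show ?thesis using G by blast
  next
    case False
    then obtain g where g: "g \<in> G" "\<Psi> g \<in> M" by blast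
    from M g(2) obtain U F D where U: "open U" "\<Psi> g \<in> U"
      and FD: "\<forall>z\<in>U. (F has_derivative D z) (at z) \<and> clinear (D z) \<and> dim (range (D z)) = 2 * (22 - d)"
      and MU: "M \<inter> U = {z\<in>U. F z = (0::cvec)}"
      unfolding csubmanifold_def by blast
    define G1 where "G1 = G \<inter> (G0 \<inter> \<Psi> -` U)"
    have oG1: "open G1"
      unfolding G1_def using G continuous_open_preimage[OF cont oG0 U(1)] by blast
    have G1: "g \<in> G1" "G1 \<subseteq> G0" "\<Psi> ` G1 \<subseteq> U"
      unfolding G1_def using g G U(2) by auto
    then obtain x1 where x1: "x1 \<in> G1" "F (\<Psi> x1) \<noteq> 0"
      using no_open[OF oG1 _ G1(2), of F D] FD by blast
    have "continuous_on U F"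
      using FD by (intro continuous_at_imp_continuous_on) (auto dest: has_derivative_continuous)
    then have cont1: "continuous_on G1 (F \<circ> \<Psi>)"
      using G1 cont by (intro continuous_on_compose) (auto elim: continuous_on_subset)
    define G' where "G' = G1 \<inter> (F \<circ> \<Psi>) -` (- {0})"
    have "open G'" unfolding G'_def using continuous_open_preimage[OF cont1 oG1] by blast
    moreover have "x1 \<in> G'" unfolding G'_def using x1 by auto
    moreover have "G' \<inter> {x. \<Psi> x \<in> M} = {}"
    proof (intro equalityI subsetI)
      fix x assume x: "x \<in> G' \<inter> {x. \<Psi> x \<in> M}"
      then have "\<Psi> x \<in> M \<inter> U" using G1(3) unfolding G'_def by auto
      then have "F (\<Psi> x) = 0" using MU by blast
      then show "x \<in> {}" using x unfolding G'_def by simp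
    qed simp
    moreover have "G' \<subseteq> G" unfolding G'_def G1_def by auto
    ultimately show ?thesis by blast
  qed
qed

lemma period_preimage_nowhere_dense:
  fixes C :: "'p::euclidean_space \<Rightarrow> complex" and A Bv :: "'p \<Rightarrow> rvec"
  assumes sym: "transpose B = B"
    and sW: "subspace W" and sQ: "subspace Q" and WQ: "W \<inter> Q = {0}"
    and lin: "linear C" "linear A" "linear Bv"
    and ran: "\<forall>p. A p \<in> W" "\<forall>p. Bv p \<in> Q"
    and dir_c: "\<exists>h. C h = 1 \<and> A h = 0 \<and> Bv h = 0"
    and dir_a: "\<forall>v\<in>W. \<exists>h. C h = 0 \<and> A h = v \<and> Bv h = 0"
    and dir_b: "\<forall>u\<in>Q. \<exists>h. C h = 0 \<and> A h = 0 \<and> Bv h = u"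
    and oG0: "open G0"
    and pos: "\<forall>p\<in>G0. C p \<noteq> 0 \<and> bil B (A p) (A p) > 0 \<and> bil B (Bv p) (Bv p) > 0"
    and M: "csubmanifold M d" and dd: "d + 1 < dim W + dim Q"
  shows "nowhere_dense_in G0 {p. period_map B (C p) (A p) (Bv p) \<in> M}"
proof (rule preimage_submanifold_nowhere_dense[OF _ oG0 M])
  have cont: "continuous_on G0 L" if "linear L" for L :: "'p \<Rightarrow> 'b::real_normed_vector"
    using that by (intro linear_continuous_on) (simp add: linear_conv_bounded_linear)
  show "continuous_on G0 (\<lambda>p. period_map B (C p) (A p) (Bv p))"
    by (rule continuous_on_period_map[OF cont cont cont]) (use lin pos in auto)
next
  fix G1 F D
  assume G1: "open G1" "G1 \<noteq> {}" "G1 \<subseteq> G0"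
    and FD: "\<forall>x\<in>G1. (F has_derivative D (period_map B (C x) (A x) (Bv x))) (at (period_map B (C x) (A x) (Bv x)))
        \<and> clinear (D (period_map B (C x) (A x) (Bv x)))
        \<and> dim (range (D (period_map B (C x) (A x) (Bv x)))) = 2 * (22 - d)"
    and zero: "\<forall>x\<in>G1. F (period_map B (C x) (A x) (Bv x)) = 0"
  obtain g where g: "g \<in> G1" using G1(2) by blast
  have d22: "d \<le> 22" using M by (simp add: csubmanifold_def)
  have along: "eventually (\<lambda>t. F (period_map B (C g + t *\<^sub>R C h) (A g + t *\<^sub>R A h) (Bv g + t *\<^sub>R Bv h)) = 0) (nhds 0)"
    for h
  proof (rule eventually_mono[OF eventually_line[OF G1(1) g, of h]])
    fix t :: real assume "g + t *\<^sub>R h \<in> G1"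
    from zero[rule_format, OF this] lin
    show "F (period_map B (C g + t *\<^sub>R C h) (A g + t *\<^sub>R A h) (Bv g + t *\<^sub>R Bv h)) = 0"
      by (simp add: linear_add linear_scale)
  qed
  have Z1: "eventually (\<lambda>t. F (period_map B (C g + complex_of_real t) (A g) (Bv g)) = 0) (nhds 0)"
  proof -
    obtain h where h: "C h = 1" "A h = 0" "Bv h = 0" using dir_c by blast
    show ?thesis
      by (rule eventually_mono[OF along[of h]]) (simp only: h of_real_def scaleR_zero_right add_0_right)
  qed
  have Z2: "eventually (\<lambda>t. F (period_map B (C g) (A g + t *\<^sub>R v) (Bv g)) = 0) (nhds 0)"
    if v: "v \<in> W" for v
  proof -
    obtain h where h: "C h = 0" "A h = v" "Bv h = 0" using bspec[OF dir_a v] by (elim exE conjE)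
    show ?thesis
      by (rule eventually_mono[OF along[of h]]) (simp add: h)
  qed
  have Z3: "eventually (\<lambda>t. F (period_map B (C g) (A g) (Bv g + t *\<^sub>R u)) = 0) (nhds 0)"
    if u: "u \<in> Q" for u
  proof -
    obtain h where h: "C h = 0" "A h = 0" "Bv h = u" using bspec[OF dir_b u] by (elim exE conjE)
    show ?thesis
      by (rule eventually_mono[OF along[of h]]) (simp add: h)
  qed
  have gG0: "g \<in> G0" using g G1(3) by blast
  show False
  proof (rule period_family_not_in_submanifold[OF sym sW sQ WQ])
    show "A g \<in> W" "Bv g \<in> Q" using ran by blast+
    show "bil B (A g) (A g) > 0" "bil B (Bv g) (Bv g) > 0" "C g \<noteq> 0" using pos gG0 by blast+
    show "(F has_derivative D (period_map B (C g) (A g) (Bv g))) (at (period_map B (C g) (A g) (Bv g)))"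
      "clinear (D (period_map B (C g) (A g) (Bv g)))"
      "dim (range (D (period_map B (C g) (A g) (Bv g)))) = 2 * (22 - d)"
      using FD g by blast+
  qed (use d22 dd Z1 Z2 Z3 in auto)
qed

section \<open>Orthogonal complements of sublattices are rational\<close>

lemma Lint_comb:
  "x \<in> Lint \<Longrightarrow> y \<in> Lint \<Longrightarrow> c \<in> \<int> \<Longrightarrow> d \<in> \<int> \<Longrightarrow> c *\<^sub>R x - d *\<^sub>R y \<in> Lint"
  by (simp add: Lint_def Ints_mult Ints_diff)

lemma Basis_Lint: "(Basis :: rvec set) \<subseteq> Lint"
  by (auto simp: Lint_def Basis_vec_def axis_def)

lemma bil_Lint:
  assumes "\<forall>i j. B $ i $ j \<in> \<int>" "x \<in> Lint" "y \<in> Lint"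
  shows "bil B x y \<in> \<int>"
proof -
  have "bil B x y = (\<Sum>i\<in>UNIV. \<Sum>j\<in>UNIV. x $ i * B $ i $ j * y $ j)"
    by (simp add: bil_def inner_vec_def matrix_vector_mult_def sum_distrib_left mult.assoc)
  then show ?thesis using assms by (auto simp: Lint_def intro!: Ints_sum Ints_mult)
qed

text \<open>Cutting the span of a set of lattice vectors by the kernel of an integral linear
  functional f leaves a space spanned by lattice vectors: with f s0 = c nonzero, the
  lattice vectors c y - f y s0 span the kernel.\<close>

lemma lattice_kernel_section:
  fixes f :: "rvec \<Rightarrow> real"
  assumes lin: "linear f" and int: "\<forall>x\<in>Lint. f x \<in> \<int>" and S: "S \<subseteq> Lint"
  shows "\<exists>S'. S' \<subseteq> Lint \<and> span S' = span S \<inter> {x. f x = 0}"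
proof (cases "\<forall>s\<in>S. f s = 0")
  case True
  have "span S \<subseteq> {x. f x = 0}"
    using True lin by (intro span_minimal) (auto simp: subspace_def linear_add linear_scale linear_0)
  then show ?thesis using S by blast
next
  case False
  then obtain s0 where s0: "s0 \<in> S" "f s0 \<noteq> 0" by blast
  define c where "c = f s0"
  define \<phi> where "\<phi> y = c *\<^sub>R y - f y *\<^sub>R s0" for y
  have lphi: "linear \<phi>"
    unfolding \<phi>_def[abs_def] using lin
    by (intro linearI) (simp_all add: linear_add linear_scale algebra_simps)
  have f_phi: "f (\<phi> y) = 0" for y
    unfolding \<phi>_def c_def using lin by (simp add: linear_diff linear_scale)
  have "\<phi> ` S \<subseteq> Lint"
    using S s0(1) int unfolding \<phi>_def c_def by (auto intro!: Lint_comb)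
  moreover have "\<phi> ` span S = span S \<inter> {x. f x = 0}"
  proof
    show "\<phi> ` span S \<subseteq> span S \<inter> {x. f x = 0}"
    proof
      fix z assume "z \<in> \<phi> ` span S"
      then obtain y where y: "y \<in> span S" "z = \<phi> y" by blast
      have "s0 \<in> span S" using s0(1) by (rule span_base)
      then have "z \<in> span S" unfolding y(2) \<phi>_def using y(1) by (intro span_diff span_scale)
      then show "z \<in> span S \<inter> {x. f x = 0}" using y(2) f_phi by simp
    qed
    show "span S \<inter> {x. f x = 0} \<subseteq> \<phi> ` span S"
    proof
      fix z assume z: "z \<in> span S \<inter> {x. f x = 0}"
      have "c \<noteq> 0" using s0(2) c_def by simp
      then have "\<phi> ((1 / c) *\<^sub>R z) = z"
        using z lin unfolding \<phi>_def by (simp add: linear_scale)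
      moreover have "(1 / c) *\<^sub>R z \<in> span S" using z by (simp add: span_scale)
      ultimately show "z \<in> \<phi> ` span S" by (metis image_eqI)
    qed
  qed
  ultimately show ?thesis
    using linear_span_image[OF lphi, of S] by (intro exI[of _ "\<phi> ` S"]) simp
qed

lemma lattice_kernel:
  fixes h :: "'g \<Rightarrow> rvec \<Rightarrow> real"
  assumes fin: "finite G" and lin: "\<And>g. linear (h g)" and int: "\<forall>g\<in>G. \<forall>x\<in>Lint. h g x \<in> \<int>"
    and S: "S \<subseteq> Lint"
  shows "\<exists>S'. S' \<subseteq> Lint \<and> span S' = span S \<inter> {x. \<forall>g\<in>G. h g x = 0}"
  using fin int
proof (induction G)
  case empty
  show ?case using S by auto
next
  case (insert g G)
  then obtain S' where S': "S' \<subseteq> Lint" "span S' = span S \<inter> {x. \<forall>g\<in>G. h g x = 0}"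
    by auto
  have "\<forall>x\<in>Lint. h g x \<in> \<int>" using insert.prems by simp
  from lattice_kernel_section[OF lin this S'(1)]
  obtain S'' where S'': "S'' \<subseteq> Lint" "span S'' = span S' \<inter> {x. h g x = 0}"
    by blast
  have "span S'' = span S \<inter> {x. \<forall>g'\<in>insert g G. h g' x = 0}"
    unfolding S''(2) S'(2) by blast
  then show ?case using S''(1) by blast
qed

lemma lattice_perp_rational:
  assumes Bint: "\<forall>i j. B $ i $ j \<in> \<int>" and S: "S \<subseteq> Lint"
  shows "{x. \<forall>y\<in>S. bil B x y = 0} \<subseteq> span (orth_compl B S)"
proof -
  obtain G where G: "G \<subseteq> S" "independent G" "S \<subseteq> span G"
    by (rule basis_exists[of S])
  have "finite G" using G(2) by (rule finiteI_independent)
  moreover have "\<forall>g\<in>G. \<forall>x\<in>Lint. bil B x g \<in> \<int>"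
    using bil_Lint[OF Bint] G(1) S by blast
  ultimately obtain S' where S': "S' \<subseteq> Lint"
    "span S' = span Basis \<inter> {x. \<forall>g\<in>G. bil B x g = 0}"
    using lattice_kernel[of G "\<lambda>g x. bil B x g", OF _ linear_bil_left _ Basis_Lint] by blast
  have "{x. \<forall>g\<in>G. bil B x g = 0} = {x. \<forall>y\<in>span G. bil B x y = 0}"
    by (rule bil_perp_span[symmetric])
  also have "span G = span S"
    using G(1,3) by (auto simp: span_eq intro: span_base)
  also have "{x. \<forall>y\<in>span S. bil B x y = 0} = {x. \<forall>y\<in>S. bil B x y = 0}"
    by (rule bil_perp_span)
  finally have perp: "span S' = {x. \<forall>y\<in>S. bil B x y = 0}"
    using S'(2) by (simp add: span_Basis)
  have "S' \<subseteq> orth_compl B S"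
  proof
    fix s assume "s \<in> S'"
    then have "s \<in> span S'" by (rule span_base)
    then show "s \<in> orth_compl B S" using perp S'(1) \<open>s \<in> S'\<close> unfolding orth_compl_def by auto
  qed
  then have "span S' \<subseteq> span (orth_compl B S)" by (rule span_mono)
  then show ?thesis unfolding perp .
qed

lemma amp_cone_pos: "amp_cone B N Amp \<Longrightarrow> x \<in> Amp \<Longrightarrow> bil B x x > 0"
  unfolding amp_cone_def using in_components_subset by blast

lemma amp_cone_scale: "amp_cone B N Amp \<Longrightarrow> x \<in> Amp \<Longrightarrow> t > 0 \<Longrightarrow> t *\<^sub>R x \<in> Amp"
  unfolding amp_cone_def by blast

lemma amp_cone_open:
  "amp_cone B N Amp \<Longrightarrow> x \<in> Amp \<Longrightarrow> \<exists>e>0. \<forall>x'\<in>span N. dist x' x < e \<longrightarrow> x' \<in> Amp"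
  unfolding amp_cone_def openin_euclidean_subtopology_iff by blast

text \<open>The hypotheses of the theorem on N+ = Np and N- = Nm.  R = N+ \<inter> N-,
  W+ = T- \<inter> N+, W- = T+ \<inter> N- (as real spans) and Q is the orthogonal complement of
  N+ + N- in L_R.\<close>

locale orthogonal_pair =
  fixes B :: "real^22^22" and Np Nm Ampp Ampm :: "rvec set" and rp rm :: nat
  assumes K3: "K3_form B"
    and pNp: "primitive_sublattice Np" and pNm: "primitive_sublattice Nm"
    and sigp: "form_signature B (span Np) 1 (rp - 1)"
    and sigm: "form_signature B (span Nm) 1 (rm - 1)"
    and ampp: "amp_cone B Np Ampp" and ampm: "amp_cone B Nm Ampm"
    and negR: "neg_def_on B (span (Np \<inter> Nm))"
    and decp: "span Np = {x + y | x y. x \<in> span (Np \<inter> Nm) \<and> y \<in> span (orth_compl B Nm \<inter> Np)}"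
    and intp: "span (Np \<inter> Nm) \<inter> span (orth_compl B Nm \<inter> Np) = {0}"
    and decm: "span Nm = {x + y | x y. x \<in> span (Np \<inter> Nm) \<and> y \<in> span (orth_compl B Np \<inter> Nm)}"
    and Ap: "span (orth_compl B Nm \<inter> Np) \<inter> Ampp \<noteq> {}"
    and Am: "span (orth_compl B Np \<inter> Nm) \<inter> Ampm \<noteq> {}"
begin

abbreviation "R \<equiv> span (Np \<inter> Nm)"
abbreviation "Wp \<equiv> span (orth_compl B Nm \<inter> Np)"
abbreviation "Wm \<equiv> span (orth_compl B Np \<inter> Nm)"
abbreviation "Q \<equiv> {x. \<forall>y\<in>Np \<union> Nm. bil B x y = 0}"

lemma sym: "transpose B = B"
  using K3 by (simp add: K3_form_def)

lemma bsym: "bil B x y = bil B y x"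
  using bil_sym[OF sym] .

lemma sig_K3: "form_signature B UNIV 3 19"
  using K3 by (simp add: K3_form_def)

lemma nondegenerate: "(\<forall>y. bil B x y = 0) \<Longrightarrow> x = 0"
  using sig_K3 unfolding form_signature_def by blast

lemma nondegenerate_p: "x \<in> span Np \<Longrightarrow> (\<forall>y\<in>span Np. bil B x y = 0) \<Longrightarrow> x = 0"
  using sigp unfolding form_signature_def by blast

lemma nondegenerate_m: "x \<in> span Nm \<Longrightarrow> (\<forall>y\<in>span Nm. bil B x y = 0) \<Longrightarrow> x = 0"
  using sigm unfolding form_signature_def by blast

lemma subspace_Q: "subspace Q"
  by (rule subspace_bil_perp)

lemma Wp_sub: "Wp \<subseteq> span Np" and Wm_sub: "Wm \<subseteq> span Nm"
  and R_sub_p: "R \<subseteq> span Np" and R_sub_m: "R \<subseteq> span Nm"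
  by (rule span_mono, blast)+

lemma Wp_sub_orth: "Wp \<subseteq> span (orth_compl B Nm)" and Wm_sub_orth: "Wm \<subseteq> span (orth_compl B Np)"
  by (rule span_mono, blast)+

lemma Wp_orth: "x \<in> Wp \<Longrightarrow> y \<in> span Nm \<Longrightarrow> bil B x y = 0"
  by (rule bil_span_orth[of "orth_compl B Nm \<inter> Np" Nm]) (auto simp: orth_compl_def)

lemma Wm_orth: "x \<in> Wm \<Longrightarrow> y \<in> span Np \<Longrightarrow> bil B x y = 0"
  by (rule bil_span_orth[of "orth_compl B Np \<inter> Nm" Np]) (auto simp: orth_compl_def)

lemma Q_orth: "x \<in> Q \<Longrightarrow> y \<in> span (Np \<union> Nm) \<Longrightarrow> bil B x y = 0"
  using bil_perp_span[of "Np \<union> Nm" B] by blast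

lemma Q_orth_p: "x \<in> Q \<Longrightarrow> y \<in> span Np \<Longrightarrow> bil B y x = 0"
  and Q_orth_m: "x \<in> Q \<Longrightarrow> y \<in> span Nm \<Longrightarrow> bil B y x = 0"
  using Q_orth[of x y] span_mono[of Np "Np \<union> Nm"] span_mono[of Nm "Np \<union> Nm"] bsym[of y x]
  by auto

lemma span_union_decomp:
  assumes "v \<in> span (Np \<union> Nm)"
  obtains r wp wm where "r \<in> R" "wp \<in> Wp" "wm \<in> Wm" "v = r + wp + wm"
proof -
  obtain x y where xy: "v = x + y" "x \<in> span Np" "y \<in> span Nm"
    using assms by (auto simp: span_Un)
  obtain r1 wp where 1: "x = r1 + wp" "r1 \<in> R" "wp \<in> Wp" using xy(2) decp by blast
  obtain r2 wm where 2: "y = r2 + wm" "r2 \<in> R" "wm \<in> Wm" using xy(3) decm by blast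
  have "r1 + r2 \<in> R" using 1(2) 2(2) by (rule span_add)
  moreover have "v = (r1 + r2) + wp + wm" using xy(1) 1(1) 2(1) by (simp add: algebra_simps)
  ultimately show ?thesis using that 1(3) 2(3) by blast
qed

text \<open>The form is non-degenerate on the span of N+ and N-, so Q meets it trivially.\<close>

lemma Q_inter_span: "x \<in> Q \<Longrightarrow> x \<in> span (Np \<union> Nm) \<Longrightarrow> x = 0"
proof -
  assume xQ: "x \<in> Q" and x: "x \<in> span (Np \<union> Nm)"
  from x obtain r wp wm where d: "r \<in> R" "wp \<in> Wp" "wm \<in> Wm" "x = r + wp + wm"
    by (rule span_union_decomp)
  have "r + wp \<in> span Np" using d R_sub_p Wp_sub span_add by blast
  moreover have "bil B (r + wp) y = 0" if "y \<in> span Np" for y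
  proof -
    have "bil B x y = 0" using Q_orth_p[OF xQ that] bsym by simp
    moreover have "bil B wm y = 0" using Wm_orth[OF d(3) that] .
    ultimately show ?thesis using d(4) by (simp add: bil_simps)
  qed
  ultimately have "r + wp = 0" using nondegenerate_p by blast
  then have "wp = - r" by (simp add: eq_neg_iff_add_eq_0 add.commute)
  then have "wp \<in> R \<inter> Wp" using d(1,2) span_neg by fastforce
  then have "wp = 0" "r = 0" using intp \<open>wp = - r\<close> by auto
  then have "x = wm" using d(4) by simp
  moreover have "bil B wm y = 0" if "y \<in> span Nm" for y
    using Q_orth_m[OF xQ that] bsym \<open>x = wm\<close> by simp
  ultimately show "x = 0"
    using nondegenerate_m d(3) Wm_sub by blast
qed

lemma Wp_inter_Q: "Wp \<inter> Q = {0}" and Wm_inter_Q: "Wm \<inter> Q = {0}"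
  using Q_inter_span span_mono[of Np "Np \<union> Nm"] span_mono[of Nm "Np \<union> Nm"] Wp_sub Wm_sub
  by (fastforce simp: span_zero)+

lemma dim_Q: "dim Q + dim (span (Np \<union> Nm)) = 22"
  by (rule dim_bil_perp[OF sym nondegenerate])

text \<open>Dimension count: the orthogonal complement of N+ has dimension at most
  dim W- + dim Q (and symmetrically), since N+ + N- = N+ + W-.\<close>

lemma dim_orth_compl_le:
  assumes NW: "N = Np \<and> W = Wm \<or> N = Nm \<and> W = Wp"
  shows "dim (span (orth_compl B N)) \<le> dim W + dim Q"
proof -
  have "span (Np \<union> Nm) \<subseteq> {x + y |x y. x \<in> span N \<and> y \<in> W}"
  proof
    fix v assume "v \<in> span (Np \<union> Nm)"
    then obtain r wp wm where d: "r \<in> R" "wp \<in> Wp" "wm \<in> Wm" "v = r + wp + wm"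
      by (rule span_union_decomp)
    show "v \<in> {x + y |x y. x \<in> span N \<and> y \<in> W}"
      using NW
    proof
      assume NW: "N = Np \<and> W = Wm"
      then have "r + wp \<in> span N" using d R_sub_p Wp_sub span_add by blast
      then show ?thesis using NW d(3,4) by force
    next
      assume NW: "N = Nm \<and> W = Wp"
      then have "r + wm \<in> span N" using d R_sub_m Wm_sub span_add by blast
      moreover have "v = (r + wm) + wp" using d(4) by (simp add: algebra_simps)
      ultimately show ?thesis using NW d(2) by force
    qed
  qed
  then have "dim (span (Np \<union> Nm)) \<le> dim {x + y |x y. x \<in> span N \<and> y \<in> W}"
    by (rule dim_subset)
  also have "\<dots> \<le> dim (span N) + dim W"
    by (rule dim_sum_le) (use NW in auto)
  finally have union: "dim (span (Np \<union> Nm)) \<le> dim (span N) + dim W" .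
  have "span (orth_compl B N) \<subseteq> {x. \<forall>y\<in>N. bil B x y = 0}"
    by (rule span_minimal[OF _ subspace_bil_perp]) (auto simp: orth_compl_def)
  then have "dim (span (orth_compl B N)) \<le> dim {x. \<forall>y\<in>N. bil B x y = 0}"
    by (rule dim_subset)
  moreover have "dim {x. \<forall>y\<in>N. bil B x y = 0} + dim (span N) = 22"
    by (rule dim_bil_perp[OF sym nondegenerate])
  ultimately show ?thesis using union dim_Q by linarith
qed

end

context orthogonal_pair
begin

text \<open>On the part of N+ + N- orthogonal to ample classes ap in W+ and am in W-, the form
  is negative semidefinite: R is negative definite, and the parts of W+- orthogonal to
  ap, am are negative semidefinite since N+- have signature (1, *).\<close>

lemma nonpos_on_sections:
  assumes ap: "ap \<in> Wp" "bil B ap ap > 0" and am: "am \<in> Wm" "bil B am am > 0"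
    and v: "v \<in> span (Np \<union> Nm)" "bil B ap v = 0" "bil B am v = 0"
  shows "bil B v v \<le> 0"
proof -
  obtain r wp wm where d: "r \<in> R" "wp \<in> Wp" "wm \<in> Wm" "v = r + wp + wm"
    using v(1) by (rule span_union_decomp)
  have rNp: "r \<in> span Np" and rNm: "r \<in> span Nm" using d(1) R_sub_p R_sub_m by blast+
  have wmNm: "wm \<in> span Nm" using d(3) Wm_sub by blast
  have orth: "bil B wp r = 0" "bil B wp wm = 0" "bil B wm r = 0"
    using Wp_orth[OF d(2) rNm] Wp_orth[OF d(2) wmNm] Wm_orth[OF d(3) rNp] by simp_all
  have "bil B v v = bil B r r + bil B wp wp + bil B wm wm"
    unfolding d(4) using orth bsym[of r wp] bsym[of r wm] bsym[of wm wp] by (simp add: bil_simps)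
  moreover have "bil B r r \<le> 0"
    using negR d(1) unfolding neg_def_on_def by (cases "r = 0") (auto simp: less_imp_le)
  moreover have "bil B wp wp \<le> 0"
  proof (rule hyperbolic_perp_nonpos[OF sym sigp])
    show "ap \<in> span Np" "wp \<in> span Np" using ap(1) d(2) Wp_sub by blast+
    have "bil B ap r = 0" "bil B ap wm = 0" using Wp_orth[OF ap(1)] rNm wmNm by blast+
    then show "bil B ap wp = 0" using v(2) d(4) by (simp add: bil_simps)
  qed (use ap in simp)
  moreover have "bil B wm wm \<le> 0"
  proof (rule hyperbolic_perp_nonpos[OF sym sigm])
    show "am \<in> span Nm" "wm \<in> span Nm" using am(1) d(3) Wm_sub by blast+
    have "bil B am r = 0" "bil B am wp = 0"
      using Wm_orth[OF am(1)] rNp d(2) Wp_sub by blast+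
    then show "bil B am wm = 0" using v(3) d(4) by (simp add: bil_simps)
  qed (use am in simp)
  ultimately show ?thesis by linarith
qed

text \<open>Otherwise Q together with the
  codimension-two section of N+ + N- above spans a negative semidefinite subspace of
  dimension at least 20, which is impossible in signature (3,19).\<close>

lemma positive_in_Q: "\<exists>b\<in>Q. bil B b b > 0"
proof (rule ccontr)
  assume "\<not> (\<exists>b\<in>Q. bil B b b > 0)"
  then have Qneg: "\<forall>q\<in>Q. bil B q q \<le> 0" by (auto simp: not_less)
  obtain ap where ap: "ap \<in> Wp" "ap \<in> Ampp" using Ap by blast
  obtain am where am: "am \<in> Wm" "am \<in> Ampm" using Am by blast
  have app: "bil B ap ap > 0" and amp: "bil B am am > 0"
    using amp_cone_pos[OF ampp ap(2)] amp_cone_pos[OF ampm am(2)] .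
  define T' where "T' = span (Np \<union> Nm) \<inter> {v. bil B ap v = 0} \<inter> {v. bil B am v = 0}"
  have sT': "subspace T'"
    unfolding T'_def by (intro subspace_inter subspace_span subspace_bil_ker)
  have "dim (span (Np \<union> Nm)) \<le> dim T' + 2"
    using dim_hyperplane_section[OF subspace_span linear_bil_right[of B ap], of "Np \<union> Nm"]
      dim_hyperplane_section[OF subspace_inter[OF subspace_span subspace_bil_ker]
        linear_bil_right[of B am], of "Np \<union> Nm" B ap]
    unfolding T'_def by linarith
  define T where "T = {x + y |x y. x \<in> T' \<and> y \<in> Q}"
  have sT: "subspace T" unfolding T_def by (rule subspace_sums[OF sT' subspace_Q])
  have "T' \<inter> Q \<subseteq> {0}" using Q_inter_span unfolding T'_def by blast
  then have "dim (T' \<inter> Q) = 0" by simp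
  then have "dim T = dim T' + dim Q"
    using dim_sums_Int[OF sT' subspace_Q] unfolding T_def by linarith
  moreover have "\<forall>t\<in>T. bil B t t \<le> 0"
  proof
    fix t assume "t \<in> T"
    show "bil B t t \<le> 0"
    proof (rule nonpos_orthogonal_sum[OF sym _ Qneg])
      show "\<forall>x\<in>T'. bil B x x \<le> 0"
        using nonpos_on_sections[OF ap(1) app am(1) amp] unfolding T'_def by blast
      show "\<forall>x\<in>T'. \<forall>y\<in>Q. bil B x y = 0"
      proof (intro ballI)
        fix x y assume "x \<in> T'" "y \<in> Q"
        then have "bil B y x = 0" using Q_orth unfolding T'_def by blast
        then show "bil B x y = 0" using bsym by simp
      qed
      show "t \<in> {x + y |x y. x \<in> T' \<and> y \<in> Q}" using \<open>t \<in> T\<close> unfolding T_def .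
    qed
  qed
  then have "dim T + 3 \<le> 22" by (rule nonpos_subspace_dim[OF sig_K3 sT])
  ultimately show False using dim_Q \<open>dim (span (Np \<union> Nm)) \<le> dim T' + 2\<close> by linarith
qed

text \<open>Step (2): Q is defined over the integers, so it lies in the spans of T+ and T-.\<close>

lemma Q_rational: "Q \<subseteq> span (orth_compl B Np)" "Q \<subseteq> span (orth_compl B Nm)"
proof -
  have "Np \<union> Nm \<subseteq> Lint"
    using pNp pNm by (simp add: primitive_sublattice_def sublattice_def)
  moreover have "\<forall>i j. B $ i $ j \<in> \<int>" using K3 by (simp add: K3_form_def)
  ultimately have "Q \<subseteq> span (orth_compl B (Np \<union> Nm))"
    by (rule lattice_perp_rational[rotated])
  moreover have "span (orth_compl B (Np \<union> Nm)) \<subseteq> span (orth_compl B N)" if "N \<subseteq> Np \<union> Nm" for N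
    using that by (intro span_mono) (auto simp: orth_compl_def)
  ultimately show "Q \<subseteq> span (orth_compl B Np)" "Q \<subseteq> span (orth_compl B Nm)" by blast+
qed

end

lemma period_point_realised:
  assumes sym: "transpose B = B"
    and a: "a \<in> span (orth_compl B N)" "bil B a a > 0"
    and b: "b \<in> span (orth_compl B N)" "bil B b b > 0" and ab: "bil B a b = 0"
    and U: "griffiths_domain B N - U = \<Union>F" "\<forall>P\<in>U. \<forall>k\<in>Amp. Real P k"
    and avoid: "\<forall>S\<in>F. period_map B c a b \<notin> \<Union>S" and k: "k \<in> Amp"
  shows "Real (cline (cof (normalise B a) + cscale \<i> (cof (normalise B b)))) k"
proof -
  let ?w = "cof (normalise B a) + cscale \<i> (cof (normalise B b))"
  have "?w \<in> period_cone B N"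
  proof (rule period_cone_memI[OF sym])
    show "normalise B a \<in> span (orth_compl B N)" "normalise B b \<in> span (orth_compl B N)"
      unfolding normalise_def using a(1) b(1) by (auto intro: span_scale)
    show "bil B (normalise B a) (normalise B a) = bil B (normalise B b) (normalise B b)"
      "bil B (normalise B a) (normalise B a) > 0"
      using normalise_square a(2) b(2) by simp_all
    show "bil B (normalise B a) (normalise B b) = 0"
      unfolding normalise_def using ab by (simp add: bil_simps)
  qed
  then have "cline ?w \<in> griffiths_domain B N" unfolding griffiths_domain_def by blast
  moreover have "period_map B c a b \<in> cline ?w"
    unfolding period_map_normalise[OF a(2) b(2)] cline_def by blast
  then have "cline ?w \<notin> \<Union>F" using avoid by blast
  ultimately have "cline ?w \<in> U" using U(1) by blast
  then show ?thesis using U(2) k by blast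
qed

definition retraction :: "rvec set \<Rightarrow> rvec \<Rightarrow> rvec" where
  "retraction W = (SOME P. linear P \<and> (\<forall>x. P x \<in> W) \<and> (\<forall>w\<in>W. P w = w))"

lemma retraction:
  assumes "subspace W"
  shows "linear (retraction W)" "retraction W x \<in> W" "w \<in> W \<Longrightarrow> retraction W w = w"
proof -
  obtain g where "g ` UNIV \<subseteq> W" "linear g" "\<forall>v\<in>W. g (id v) = v"
    using linear_exists_left_inverse_on[of id W] assms linear_id by (auto simp: id_def)
  then have "\<exists>P. linear P \<and> (\<forall>x. P x \<in> W) \<and> (\<forall>w\<in>W. P w = w)" by auto
  from someI_ex[OF this]
  have "linear (retraction W) \<and> (\<forall>x. retraction W x \<in> W) \<and> (\<forall>w\<in>W. retraction W w = w)"
    unfolding retraction_def .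
  then show "linear (retraction W)" "retraction W x \<in> W" "w \<in> W \<Longrightarrow> retraction W w = w"
    by blast+
qed

text \<open>A parameter (c, x, y, u) encodes the complex scalar c and vectors k+ in W+, k- in W-,
  k0 in Q (obtained from x, y, u by retraction).  It gives the period point of the line of
  c (k- + i l k0) for N+ and of c (k+ - i l' k0) for N-.\<close>

type_synonym param = "complex \<times> rvec \<times> rvec \<times> rvec"

context orthogonal_pair
begin

definition kplus :: "param \<Rightarrow> rvec" where "kplus p = retraction Wp (fst (snd p))"
definition kminus :: "param \<Rightarrow> rvec" where "kminus p = retraction Wm (fst (snd (snd p)))"
definition kzero :: "param \<Rightarrow> rvec" where "kzero p = retraction Q (snd (snd (snd p)))"

definition period_plus :: "param \<Rightarrow> cvec" where
  "period_plus p = period_map B (fst p) (kminus p) (kzero p)"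
definition period_minus :: "param \<Rightarrow> cvec" where
  "period_minus p = period_map B (fst p) (kplus p) (- kzero p)"

definition admissible :: "param \<Rightarrow> bool" where
  "admissible p \<longleftrightarrow> fst p \<noteq> 0 \<and> bil B (kplus p) (kplus p) > 0 \<and>
     bil B (kminus p) (kminus p) > 0 \<and> bil B (kzero p) (kzero p) > 0"

lemmas retraction_Wp = retraction[OF subspace_span[of "orth_compl B Nm \<inter> Np"]]
lemmas retraction_Wm = retraction[OF subspace_span[of "orth_compl B Np \<inter> Nm"]]
lemmas retraction_Q = retraction[OF subspace_Q]

lemma kparts_linear: "linear kplus" "linear kminus" "linear kzero"
  unfolding kplus_def kminus_def kzero_def
  by (rule linearI;
      simp add: linear_add[OF retraction_Wp(1)] linear_add[OF retraction_Wm(1)]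
        linear_add[OF retraction_Q(1)] linear_scale[OF retraction_Wp(1)]
        linear_scale[OF retraction_Wm(1)] linear_scale[OF retraction_Q(1)])+

lemma kparts_range: "kplus p \<in> Wp" "kminus p \<in> Wm" "kzero p \<in> Q"
  unfolding kplus_def kminus_def kzero_def
  using retraction_Wp(2) retraction_Wm(2) retraction_Q(2) by blast+

lemma kparts_base:
  assumes "x \<in> Wp" "y \<in> Wm" "u \<in> Q"
  shows "kplus (c, x, y, u) = x" "kminus (c, x, y, u) = y" "kzero (c, x, y, u) = u"
  unfolding kplus_def kminus_def kzero_def
  using retraction_Wp(3) retraction_Wm(3) retraction_Q(3) assms by simp_all

lemma zero_in: "0 \<in> Wp" "0 \<in> Wm" "0 \<in> Q"
  by (simp_all add: span_zero)

lemma continuous_on_kparts: "continuous_on S kplus" "continuous_on S kminus" "continuous_on S kzero"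
  using kparts_linear by (auto intro: linear_continuous_on simp: linear_conv_bounded_linear)

lemma isCont_kparts: "isCont kplus x" "isCont kminus x"
  using kparts_linear by (auto intro: linear_continuous_at simp: linear_conv_bounded_linear)

lemma open_admissible: "open {p. admissible p}"
  unfolding admissible_def Collect_conj_eq
  by (intro open_Int open_Collect_neq open_Collect_less continuous_on_bil continuous_on_kparts
      continuous_intros)

lemma continuous_on_periods:
  "continuous_on {p. admissible p} period_plus" "continuous_on {p. admissible p} period_minus"
  unfolding period_plus_def period_minus_def
  by (rule continuous_on_period_map continuous_on_kparts continuous_on_fst continuous_on_id
      continuous_on_minus | simp add: admissible_def bil_simps)+

lemma nowhere_dense_plus:
  assumes G0: "open G0" "\<forall>p\<in>G0. admissible p" and S: "analytic_subm_poscodim B Np S"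
  shows "nowhere_dense_in G0 {p. period_plus p \<in> \<Union>S - {0}}"
proof -
  obtain d where d: "csubmanifold (\<Union>S - {0}) d" "d < dim (span (orth_compl B Np)) - 1"
    using S unfolding analytic_subm_poscodim_def by blast
  then have dd: "d + 1 < dim Wm + dim Q" using dim_orth_compl_le[of Np Wm] by simp
  show ?thesis unfolding period_plus_def
  proof (rule period_preimage_nowhere_dense[OF sym subspace_span subspace_Q Wm_inter_Q
        linear_fst kparts_linear(2,3) _ _ _ _ _ G0(1) _ d(1) dd])
    show "\<forall>p. kminus p \<in> Wm" "\<forall>p. kzero p \<in> Q" using kparts_range by blast+
    show "\<exists>h. fst h = 1 \<and> kminus h = 0 \<and> kzero h = 0"
      using kparts_base[of 0 0 0 1] zero_in by (intro exI[of _ "(1, 0, 0, 0)"]) simp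
    show "\<forall>v\<in>Wm. \<exists>h. fst h = 0 \<and> kminus h = v \<and> kzero h = 0"
    proof
      fix v assume "v \<in> Wm"
      then show "\<exists>h. fst h = 0 \<and> kminus h = v \<and> kzero h = 0"
        using kparts_base[of 0 v 0 0] zero_in by (intro exI[of _ "(0, 0, v, 0)"]) simp
    qed
    show "\<forall>u\<in>Q. \<exists>h. fst h = 0 \<and> kminus h = 0 \<and> kzero h = u"
    proof
      fix u assume "u \<in> Q"
      then show "\<exists>h. fst h = 0 \<and> kminus h = 0 \<and> kzero h = u"
        using kparts_base[of 0 0 u 0] zero_in by (intro exI[of _ "(0, 0, 0, u)"]) simp
    qed
    show "\<forall>p\<in>G0. fst p \<noteq> 0 \<and> bil B (kminus p) (kminus p) > 0 \<and> bil B (kzero p) (kzero p) > 0"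
      using G0(2) unfolding admissible_def by blast
  qed
qed

lemma nowhere_dense_minus:
  assumes G0: "open G0" "\<forall>p\<in>G0. admissible p" and S: "analytic_subm_poscodim B Nm S"
  shows "nowhere_dense_in G0 {p. period_minus p \<in> \<Union>S - {0}}"
proof -
  obtain d where d: "csubmanifold (\<Union>S - {0}) d" "d < dim (span (orth_compl B Nm)) - 1"
    using S unfolding analytic_subm_poscodim_def by blast
  then have dd: "d + 1 < dim Wp + dim Q" using dim_orth_compl_le[of Nm Wp] by simp
  have lin: "linear (\<lambda>p. - kzero p)" using linear_compose_neg[OF kparts_linear(3)] by simp
  show ?thesis unfolding period_minus_def
  proof (rule period_preimage_nowhere_dense[OF sym subspace_span subspace_Q Wp_inter_Q
        linear_fst kparts_linear(1) lin _ _ _ _ _ G0(1) _ d(1) dd])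
    show "\<forall>p. kplus p \<in> Wp" "\<forall>p. - kzero p \<in> Q"
      using kparts_range subspace_neg[OF subspace_Q] by blast+
    show "\<exists>h. fst h = 1 \<and> kplus h = 0 \<and> - kzero h = 0"
      using kparts_base[of 0 0 0 1] zero_in by (intro exI[of _ "(1, 0, 0, 0)"]) simp
    show "\<forall>v\<in>Wp. \<exists>h. fst h = 0 \<and> kplus h = v \<and> - kzero h = 0"
    proof
      fix v assume "v \<in> Wp"
      then show "\<exists>h. fst h = 0 \<and> kplus h = v \<and> - kzero h = 0"
        using kparts_base[of v 0 0 0] zero_in by (intro exI[of _ "(0, v, 0, 0)"]) simp
    qed
    show "\<forall>u\<in>Q. \<exists>h. fst h = 0 \<and> kplus h = 0 \<and> - kzero h = u"
    proof
      fix u assume "u \<in> Q"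
      then have "- u \<in> Q" by (rule subspace_neg[OF subspace_Q])
      then show "\<exists>h. fst h = 0 \<and> kplus h = 0 \<and> - kzero h = u"
        using kparts_base[of 0 0 "- u" 0] zero_in by (intro exI[of _ "(0, 0, 0, - u)"]) simp
    qed
    show "\<forall>p\<in>G0. fst p \<noteq> 0 \<and> bil B (kplus p) (kplus p) > 0 \<and> bil B (- kzero p) (- kzero p) > 0"
      using G0(2) unfolding admissible_def by (simp add: bil_simps)
  qed
qed

end

context orthogonal_pair
begin

lemma period_values_nonzero:
  assumes "admissible p"
  shows "period_plus p \<noteq> 0" "period_minus p \<noteq> 0"
proof -
  have "fst p \<noteq> 0" "kplus p \<noteq> 0" "kminus p \<noteq> 0"
    using assms unfolding admissible_def by auto
  then show "period_plus p \<noteq> 0" "period_minus p \<noteq> 0"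
    unfolding period_plus_def period_minus_def by (simp_all add: period_map_nonzero)
qed

lemma admissible_neighbourhood:
  assumes g0: "admissible g0" "kplus g0 \<in> Ampp" "kminus g0 \<in> Ampm"
    and V: "open Vp" "period_plus g0 \<in> Vp" "open Vm" "period_minus g0 \<in> Vm"
  obtains G0 where "open G0" "g0 \<in> G0"
    "\<forall>p\<in>G0. admissible p \<and> kplus p \<in> Ampp \<and> kminus p \<in> Ampm \<and>
             period_plus p \<in> Vp \<and> period_minus p \<in> Vm"
proof -
  obtain ep where ep: "ep > 0" "\<forall>x\<in>span Np. dist x (kplus g0) < ep \<longrightarrow> x \<in> Ampp"
    using amp_cone_open[OF ampp g0(2)] by blast
  obtain em where em: "em > 0" "\<forall>x\<in>span Nm. dist x (kminus g0) < em \<longrightarrow> x \<in> Ampm"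
    using amp_cone_open[OF ampm g0(3)] by blast
  define G0 where "G0 = ({p. admissible p} \<inter> period_plus -` Vp) \<inter> ({p. admissible p} \<inter> period_minus -` Vm)
     \<inter> kplus -` ball (kplus g0) ep \<inter> kminus -` ball (kminus g0) em"
  have "open G0"
    unfolding G0_def
    by (intro open_Int continuous_open_preimage[OF continuous_on_periods(1) open_admissible V(1)]
        continuous_open_preimage[OF continuous_on_periods(2) open_admissible V(3)]
        continuous_open_vimage[OF open_ball] isCont_kparts)
  moreover have "g0 \<in> G0" unfolding G0_def using g0(1) V(2,4) ep(1) em(1) by simp
  moreover have "kplus p \<in> Ampp" "kminus p \<in> Ampm" if "p \<in> G0" for p
    using that ep(2) em(2) kparts_range[of p] Wp_sub Wm_sub
    unfolding G0_def by (auto simp: dist_commute)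
  ultimately show ?thesis using that unfolding G0_def by blast
qed

lemma triple_from_parameter:
  assumes p: "admissible p" "kplus p \<in> Ampp" "kminus p \<in> Ampm"
    and Up: "griffiths_domain B Np - Up = \<Union>Fp" "\<forall>P\<in>Up. \<forall>k\<in>Ampp. Realp P k"
      "\<forall>S\<in>Fp. period_plus p \<notin> \<Union>S"
    and Um: "griffiths_domain B Nm - Um = \<Union>Fm" "\<forall>P\<in>Um. \<forall>k\<in>Ampm. Realm P k"
      "\<forall>S\<in>Fm. period_minus p \<notin> \<Union>S"
  shows "\<exists>kp km k0.
     bil B kp kp = 1 \<and> bil B km km = 1 \<and> bil B k0 k0 = 1 \<and>
     bil B kp km = 0 \<and> bil B kp k0 = 0 \<and> bil B km k0 = 0 \<and>
     kp \<in> Ampp \<and> km \<in> Ampm \<and>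
     Realp (cline (cof km + cscale \<i> (cof k0))) kp \<and>
     Realm (cline (cof kp - cscale \<i> (cof k0))) km"
proof -
  let ?a = "kplus p" and ?b = "kminus p" and ?z = "kzero p"
  have pos: "bil B ?a ?a > 0" "bil B ?b ?b > 0" "bil B ?z ?z > 0" "bil B (- ?z) (- ?z) > 0"
    using p(1) unfolding admissible_def by (simp_all add: bil_simps)
  have in_span: "?a \<in> span Np" "?b \<in> span Nm" using kparts_range Wp_sub Wm_sub by blast+
  have orth: "bil B ?a ?b = 0" "bil B ?a ?z = 0" "bil B ?b ?z = 0"
    using Wp_orth[OF kparts_range(1) in_span(2)] Q_orth_p[OF kparts_range(3) in_span(1)]
      Q_orth_m[OF kparts_range(3) in_span(2)] by simp_all
  define kp where "kp = normalise B ?a"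
  define km where "km = normalise B ?b"
  define k0 where "k0 = normalise B ?z"
  have k0_neg: "normalise B (- ?z) = - k0"
    unfolding k0_def normalise_def by (simp add: bil_simps)
  have "Realp (cline (cof km + cscale \<i> (cof k0))) kp"
    unfolding km_def k0_def
  proof (rule period_point_realised[OF sym _ pos(2) _ pos(3) orth(3) Up(1,2)])
    show "?b \<in> span (orth_compl B Np)" "?z \<in> span (orth_compl B Np)"
      using kparts_range Wm_sub_orth Q_rational by blast+
    show "\<forall>S\<in>Fp. period_map B (fst p) ?b ?z \<notin> \<Union>S" using Up(3) by (simp add: period_plus_def)
    show "kp \<in> Ampp"
      unfolding kp_def normalise_def using amp_cone_scale[OF ampp p(2)] pos(1) by simp
  qed
  moreover have "Realm (cline (cof kp - cscale \<i> (cof k0))) km"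
  proof -
    have "Realm (cline (cof kp + cscale \<i> (cof (normalise B (- ?z))))) km"
      unfolding kp_def
    proof (rule period_point_realised[OF sym _ pos(1) _ pos(4) _ Um(1,2)])
      show "?a \<in> span (orth_compl B Nm)" "- ?z \<in> span (orth_compl B Nm)"
        using kparts_range Wp_sub_orth Q_rational span_neg by blast+
      show "bil B ?a (- ?z) = 0" using orth(2) by (simp add: bil_simps)
      show "\<forall>S\<in>Fm. period_map B (fst p) ?a (- ?z) \<notin> \<Union>S" using Um(3) by (simp add: period_minus_def)
      show "km \<in> Ampm"
        unfolding km_def normalise_def using amp_cone_scale[OF ampm p(3)] pos(2) by simp
    qed
    then show ?thesis by (simp add: k0_neg cof_minus cscale_minus)
  qed
  moreover have "bil B kp kp = 1" "bil B km km = 1" "bil B k0 k0 = 1"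
    unfolding kp_def km_def k0_def using normalise_square pos by blast+
  moreover have "bil B kp km = 0" "bil B kp k0 = 0" "bil B km k0 = 0"
    unfolding kp_def km_def k0_def normalise_def using orth by (simp_all add: bil_simps)
  moreover have "kp \<in> Ampp" "km \<in> Ampm"
    unfolding kp_def km_def normalise_def
    using amp_cone_scale[OF ampp p(2)] amp_cone_scale[OF ampm p(3)] pos by simp_all
  ultimately show ?thesis by (intro exI[of _ kp] exI[of _ km] exI[of _ k0]) simp
qed

end

context orthogonal_pair
begin

lemma base_parameter:
  obtains g0 where "admissible g0" "kplus g0 \<in> Ampp" "kminus g0 \<in> Ampm"
    "period_plus g0 \<in> period_cone B Np" "period_minus g0 \<in> period_cone B Nm"
proof -
  obtain ap where ap: "ap \<in> Wp" "ap \<in> Ampp" using Ap by blast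
  obtain am where am: "am \<in> Wm" "am \<in> Ampm" using Am by blast
  obtain b0 where b0: "b0 \<in> Q" "bil B b0 b0 > 0" using positive_in_Q by blast
  define g0 :: param where "g0 = (1, ap, am, b0)"
  have base: "fst g0 = 1" "kplus g0 = ap" "kminus g0 = am" "kzero g0 = b0"
    unfolding g0_def using kparts_base ap(1) am(1) b0(1) by simp_all
  have pos: "bil B ap ap > 0" "bil B am am > 0"
    using amp_cone_pos[OF ampp ap(2)] amp_cone_pos[OF ampm am(2)] .
  have adm: "admissible g0" unfolding admissible_def using base pos b0(2) by simp
  have "period_plus g0 \<in> period_cone B Np"
    unfolding period_plus_def base
  proof (rule period_map_in_period_cone[OF sym _ _ pos(2) b0(2)])
    show "am \<in> span (orth_compl B Np)" "b0 \<in> span (orth_compl B Np)"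
      using am(1) b0(1) Wm_sub_orth Q_rational by blast+
    show "bil B am b0 = 0" using Q_orth_m[OF b0(1)] am(1) Wm_sub by blast
  qed
  moreover have "period_minus g0 \<in> period_cone B Nm"
    unfolding period_minus_def base
  proof (rule period_map_in_period_cone[OF sym _ _ pos(1)])
    show "ap \<in> span (orth_compl B Nm)" "- b0 \<in> span (orth_compl B Nm)"
      using ap(1) b0(1) Wp_sub_orth Q_rational span_neg by blast+
    show "bil B (- b0) (- b0) > 0" using b0(2) by (simp add: bil_simps)
    show "bil B ap (- b0) = 0" using Q_orth_p[OF b0(1)] ap(1) Wp_sub by (auto simp: bil_simps)
  qed
  ultimately show ?thesis using adm base ap(2) am(2) by (intro that) simp_all
qed

text \<open>Step (4): choose a base parameter from ample classes in W+- and a positive vector of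
  Q, shrink to a neighbourhood meeting only finitely many exceptional submanifolds of
  either family, and pick a parameter outside the nowhere dense union of their preimages.\<close>

lemma matching_period_points:
  assumes gp: "generic_family B Np Ampp Realp" and gm: "generic_family B Nm Ampm Realm"
  shows "\<exists>kp km k0.
     bil B kp kp = 1 \<and> bil B km km = 1 \<and> bil B k0 k0 = 1 \<and>
     bil B kp km = 0 \<and> bil B kp k0 = 0 \<and> bil B km k0 = 0 \<and>
     kp \<in> Ampp \<and> km \<in> Ampm \<and>
     Realp (cline (cof km + cscale \<i> (cof k0))) kp \<and>
     Realm (cline (cof kp - cscale \<i> (cof k0))) km"
proof -
  obtain Up Fp where Up: "griffiths_domain B Np - Up = \<Union>Fp" "locally_finite_in_D B Np Fp"
      "\<forall>S\<in>Fp. analytic_subm_poscodim B Np S" "\<forall>P\<in>Up. \<forall>k\<in>Ampp. Realp P k"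
    using gp unfolding generic_family_def by blast
  obtain Um Fm where Um: "griffiths_domain B Nm - Um = \<Union>Fm" "locally_finite_in_D B Nm Fm"
      "\<forall>S\<in>Fm. analytic_subm_poscodim B Nm S" "\<forall>P\<in>Um. \<forall>k\<in>Ampm. Realm P k"
    using gm unfolding generic_family_def by blast
  obtain g0 where g0: "admissible g0" "kplus g0 \<in> Ampp" "kminus g0 \<in> Ampm"
    "period_plus g0 \<in> period_cone B Np" "period_minus g0 \<in> period_cone B Nm"
    by (rule base_parameter)
  obtain Vp where Vp: "open Vp" "period_plus g0 \<in> Vp" "finite {S\<in>Fp. \<Union>S \<inter> Vp \<noteq> {}}"
    using Up(2) g0(4) unfolding locally_finite_in_D_def by blast
  obtain Vm where Vm: "open Vm" "period_minus g0 \<in> Vm" "finite {S\<in>Fm. \<Union>S \<inter> Vm \<noteq> {}}"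
    using Um(2) g0(5) unfolding locally_finite_in_D_def by blast
  obtain G0 where G0: "open G0" "g0 \<in> G0"
    "\<forall>p\<in>G0. admissible p \<and> kplus p \<in> Ampp \<and> kminus p \<in> Ampm \<and>
             period_plus p \<in> Vp \<and> period_minus p \<in> Vm"
    using admissible_neighbourhood[OF g0(1-3) Vp(1,2) Vm(1,2)] by blast
  have adm_G0: "\<forall>p\<in>G0. admissible p" using G0(3) by blast
  have "nowhere_dense_in G0 {p. \<exists>S\<in>Fp. period_plus p \<in> \<Union>S}"
    using Vp(3) G0(3) period_values_nonzero nowhere_dense_plus[OF G0(1) adm_G0] Up(3)
    by (intro nowhere_dense_locally_finite) auto
  moreover have "nowhere_dense_in G0 {p. \<exists>S\<in>Fm. period_minus p \<in> \<Union>S}"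
    using Vm(3) G0(3) period_values_nonzero nowhere_dense_minus[OF G0(1) adm_G0] Um(3)
    by (intro nowhere_dense_locally_finite) auto
  ultimately obtain p where p: "p \<in> G0"
    "p \<notin> {p. \<exists>S\<in>Fp. period_plus p \<in> \<Union>S} \<union> {p. \<exists>S\<in>Fm. period_minus p \<in> \<Union>S}"
    using nowhere_dense_misses[OF nowhere_dense_Un G0(1)] G0(2) by blast
  show ?thesis
    by (rule triple_from_parameter[OF _ _ _ Up(1,4) _ Um(1,4)]) (use p G0(3) in auto)
qed

end

theorem proposition6p18:
  fixes B :: "real^22^22" and Np Nm Ampp Ampm :: "rvec set" and rp rm :: nat
    and Realp Realm :: "cvec set \<Rightarrow> rvec \<Rightarrow> bool"
  assumes "K3_form B"
    and "primitive_sublattice Np" and "primitive_sublattice Nm"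
    and "rp \<ge> 1" and "rm \<ge> 1"
    and "form_signature B (span Np) 1 (rp - 1)"
    and "form_signature B (span Nm) 1 (rm - 1)"
    and "amp_cone B Np Ampp" and "amp_cone B Nm Ampm"
    and "generic_family B Np Ampp Realp"
    and "generic_family B Nm Ampm Realm"
    and "neg_def_on B (span (Np \<inter> Nm))"
    and "span Np = {x + y | x y. x \<in> span (Np \<inter> Nm) \<and> y \<in> span (orth_compl B Nm \<inter> Np)}"
    and "span (Np \<inter> Nm) \<inter> span (orth_compl B Nm \<inter> Np) = {0}"
    and "span Nm = {x + y | x y. x \<in> span (Np \<inter> Nm) \<and> y \<in> span (orth_compl B Np \<inter> Nm)}"
    and "span (Np \<inter> Nm) \<inter> span (orth_compl B Np \<inter> Nm) = {0}"
    and "span (orth_compl B Nm \<inter> Np) \<inter> Ampp \<noteq> {}"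
    and "span (orth_compl B Np \<inter> Nm) \<inter> Ampm \<noteq> {}"
  shows "\<exists>kp km k0.
     bil B kp kp = 1 \<and> bil B km km = 1 \<and> bil B k0 k0 = 1 \<and>
     bil B kp km = 0 \<and> bil B kp k0 = 0 \<and> bil B km k0 = 0 \<and>
     kp \<in> Ampp \<and> km \<in> Ampm \<and>
     Realp (cline (cof km + cscale \<i> (cof k0))) kp \<and>
     Realm (cline (cof kp - cscale \<i> (cof k0))) km"
proof -
  interpret orthogonal_pair B Np Nm Ampp Ampm rp rm
    using assms(1-3,6-9,12-15,17,18) by unfold_locales
  show ?thesis using assms(10,11) by (rule matching_period_points)
qed

end
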